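(* Let $p$ be a directed lattice path on the square grid with at least one step, with first step $\mathbf a$ and last step $\mathbf b$, and set $x^{\circlearrowright}(p)=(x_{ur},x_{rd},x_{dl},x_{lu})$ and $x^{\circlearrowleft}(p)=(x_{ru},x_{dr},x_{ld},x_{ul})$, where $x_{st}$ is the number of turns of type $st$ in $p$. (1) There is an integer $k$ such that $v(p):=x^{\circlearrowright}(p)-x^{\circlearrowleft}(p)-k(1,1,1,1)\in\{0,1\}^4$. (2) Writing $v(p)=(v_{ur},v_{rd},v_{dl},v_{lu})$, let $\mathbf a=s_0,s_1,\dots,s_m=\mathbf b$ be the shortest sequence ($0\le m\le 3$) in which each $s_{j+1}$ is the clockwise successor of $s_j$ in the cyclic order $u\to r\to d\to l\to u$. Then $v_t=1$ if and only if $t=s_js_{j+1}$ for some $0\le j<m$. (3) If $p$ is closed and self-avoiding, with turns counted cyclically, then $(x^{\circlearrowright}(p)-x^{\circlearrowleft}(p))\cdot(1,1,1,1)^t$ equals $4$ if $p$ is oriented clockwise and $-4$ if it is oriented counterclockwise.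
   Context: A directed lattice path is a finite sequence of steps, each in $\{u=(0,1),\ r=(1,0),\ d=(0,-1),\ l=(-1,0)\}$, such that no two consecutive steps are opposite. A turn of type $st$ (with $s\ne t$) is an occurrence of a step $s$ immediately followed by a step $t$. A path is closed if it ends at its starting point; for closed paths the last step is considered to be followed by the first step (turns counted cyclically), and it is self-avoiding if it visits no lattice point twice except that start equals end. Its orientation is clockwise or counterclockwise as a simple closed polygon. *)

theory Defs
  imports Main
begin

datatype step = U | R | D | L

fun step_vec :: "step \<Rightarrow> int \<times> int" where
  "step_vec U = (0, 1)"
| "step_vec R = (1, 0)"
| "step_vec D = (0, -1)"
| "step_vec L = (-1, 0)"

fun opposite :: "step \<Rightarrow> step" where
  "opposite U = D"
| "opposite D = U"
| "opposite R = L"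
| "opposite L = R"

fun cw :: "step \<Rightarrow> step" where
  "cw U = R"
| "cw R = D"
| "cw D = L"
| "cw L = U"

definition directed :: "step list \<Rightarrow> bool" where
  "directed p \<longleftrightarrow> (\<forall>i. Suc i < length p \<longrightarrow> p ! Suc i \<noteq> opposite (p ! i))"

definition turns :: "step list \<Rightarrow> step \<Rightarrow> step \<Rightarrow> nat" where
  "turns p s t = card {i. Suc i < length p \<and> p ! i = s \<and> p ! Suc i = t}"

definition cyc_turns :: "step list \<Rightarrow> step \<Rightarrow> step \<Rightarrow> nat" where
  "cyc_turns p s t = card {i. i < length p \<and> p ! i = s \<and> p ! (Suc i mod length p) = t}"

definition pos :: "step list \<Rightarrow> nat \<Rightarrow> int \<times> int" where
  "pos p i = ((\<Sum>j<i. fst (step_vec (p ! j))), (\<Sum>j<i. snd (step_vec (p ! j))))"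

definition closed :: "step list \<Rightarrow> bool" where
  "closed p \<longleftrightarrow> pos p (length p) = (0, 0)"

text \<open>Visits no lattice point twice, except that start equals end.\<close>
definition self_avoiding :: "step list \<Rightarrow> bool" where
  "self_avoiding p \<longleftrightarrow> inj_on (pos p) {0..<length p}"

text \<open>Twice the signed (shoelace) area of the closed polygon traced by p.\<close>
definition signed_area2 :: "step list \<Rightarrow> int" where
  "signed_area2 p = (\<Sum>i<length p. fst (pos p i) * snd (pos p (Suc i))
                                     - fst (pos p (Suc i)) * snd (pos p i))"

definition clockwise :: "step list \<Rightarrow> bool" where
  "clockwise p \<longleftrightarrow> signed_area2 p < 0"

definition counterclockwise :: "step list \<Rightarrow> bool" where
  "counterclockwise p \<longleftrightarrow> signed_area2 p > 0"

definition cw_dist :: "step \<Rightarrow> step \<Rightarrow> nat" where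
  "cw_dist a b = (LEAST m. (cw ^^ m) a = b)"

end

theory Submission
  imports Defs
begin

text \<open>Appending a step t to a path whose last step is b changes the balance x_st - x_ts of a
  single pair of directions: it adds b to the clockwise arc from the first step to the last step if
  t is the clockwise successor of b, and removes t from it if b is the clockwise successor of t.

  Part (3) is a discrete Umlaufsatz, proved together with the facts that the winding numbers of the
  loop are 0 or -\<sigma> and that \<sigma> times the signed area is negative, where 4\<sigma> is the turning number.
  After rotating and possibly reversing, the loop turns U, R at its top-left vertex (a, b + 1).  If
  (a + 1, b) is not on the loop, the corner can be flipped, which lowers the loop; if the loop turns
  down next or comes back from the right, the corner cell is cut off, which shortens it.  Otherwise
  the loop splits along the chord between (a, b) and (a + 1, b) into two shorter loops.  Both are
  clockwise, as their winding numbers next to the chord show, their interiors are disjoint, and so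
  turning numbers (up to the 4 of the chord), winding numbers and areas add up.\<close>

section \<open>Turns along a path\<close>

fun step_index :: "step \<Rightarrow> nat" where
  "step_index U = 0" | "step_index R = 1" | "step_index D = 2" | "step_index L = 3"

lemma step_index_cw_iterate: "step_index ((cw ^^ m) a) = (step_index a + m) mod 4"
proof (induction m)
  case 0
  then show ?case by (cases a) auto
next
  case (Suc m)
  then show ?case by (cases "(cw ^^ m) a") (auto simp: mod_Suc)
qed

lemma step_index_inject: "step_index a = step_index b \<longleftrightarrow> a = b"
  by (cases a; cases b) simp_all

lemma cw_dist_eq: "cw_dist a b = (4 + step_index b - step_index a) mod 4"
proof -
  have iterate_iff: "(cw ^^ m) a = b \<longleftrightarrow> (step_index a + m) mod 4 = step_index b" for m
    by (metis step_index_cw_iterate step_index_inject)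
  show ?thesis
    unfolding cw_dist_def iterate_iff
  proof (rule Least_equality)
    show "(step_index a + (4 + step_index b - step_index a) mod 4) mod 4 = step_index b"
      by (cases a; cases b) simp_all
  next
    show "(4 + step_index b - step_index a) mod 4 \<le> m"
      if "(step_index a + m) mod 4 = step_index b" for m
      using that by (cases a; cases b) (simp_all, presburger+)
  qed
qed

lemma cw_dist_cw_iterate:
  assumes "j < 4"
  shows "cw_dist a ((cw ^^ j) a) = j"
proof -
  have "j = 0 \<or> j = 1 \<or> j = 2 \<or> j = 3" using assms by linarith
  then show ?thesis unfolding cw_dist_eq step_index_cw_iterate by (cases a) auto
qed

lemma cw_iterate_cw_dist: "(cw ^^ cw_dist a b) a = b"
  unfolding cw_dist_eq step_index_inject[symmetric] step_index_cw_iterate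
  by (cases a; cases b) simp_all

lemma cw_arc_iff: "(\<exists>j < cw_dist a b. s = (cw ^^ j) a) \<longleftrightarrow> cw_dist a s < cw_dist a b"
proof
  assume "\<exists>j < cw_dist a b. s = (cw ^^ j) a"
  then obtain j where "j < cw_dist a b" "s = (cw ^^ j) a" by blast
  moreover have "cw_dist a b < 4" by (simp add: cw_dist_eq)
  ultimately show "cw_dist a s < cw_dist a b" using cw_dist_cw_iterate by simp
next
  assume "cw_dist a s < cw_dist a b"
  then show "\<exists>j < cw_dist a b. s = (cw ^^ j) a" using cw_iterate_cw_dist by metis
qed

lemma directed_snocD:
  assumes "directed (q @ [t])"
  shows "directed q" and "q \<noteq> [] \<Longrightarrow> t \<noteq> opposite (last q)"
proof -
  show "directed q"
    unfolding directed_def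
  proof (intro allI impI)
    fix i assume "Suc i < length q"
    then show "q ! Suc i \<noteq> opposite (q ! i)"
      using assms unfolding directed_def by (auto simp: nth_append dest: spec[of _ i])
  qed
next
  assume "q \<noteq> []"
  then have "Suc (length q - 1) < length (q @ [t])"
    and "(q @ [t]) ! Suc (length q - 1) = t"
    and "(q @ [t]) ! (length q - 1) = last q"
    by (simp_all add: nth_append last_conv_nth)
  then show "t \<noteq> opposite (last q)"
    using assms unfolding directed_def by metis
qed

lemma turns_singleton: "turns [a] s t = 0"
  unfolding turns_def by simp

lemma turns_snoc:
  assumes "q \<noteq> []"
  shows "turns (q @ [t]) s s' = turns q s s' + (if last q = s \<and> t = s' then 1 else 0)"
proof -
  let ?n = "length q"
  let ?old = "{i. Suc i < ?n \<and> q ! i = s \<and> q ! Suc i = s'}"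
  have "{i. Suc i < length (q @ [t]) \<and> (q @ [t]) ! i = s \<and> (q @ [t]) ! Suc i = s'}
      = ?old \<union> (if last q = s \<and> t = s' then {?n - 1} else {})" (is "?new = _")
  proof (rule set_eqI)
    fix i
    show "i \<in> ?new \<longleftrightarrow> i \<in> ?old \<union> (if last q = s \<and> t = s' then {?n - 1} else {})"
    proof (cases "Suc i < ?n")
      case True
      then show ?thesis by (auto simp: nth_append)
    next
      case False
      then show ?thesis
        using assms by (cases "i = ?n - 1") (auto simp: nth_append last_conv_nth)
    qed
  qed
  moreover have "finite ?old" by (rule finite_subset[of _ "{..<?n}"]) auto
  moreover have "?n - 1 \<notin> ?old" by auto
  ultimately show ?thesis unfolding turns_def by auto
qed

definition turn_balance :: "step list \<Rightarrow> step \<Rightarrow> int" where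
  "turn_balance p s = int (turns p s (cw s)) - int (turns p (cw s) s)"

lemma turn_balance_snoc:
  assumes "q \<noteq> []"
  shows "turn_balance (q @ [t]) s = turn_balance q s
           + (if t = cw (last q) \<and> s = last q then 1 else 0) - (if last q = cw t \<and> s = t then 1 else 0)"
  unfolding turn_balance_def turns_snoc[OF assms] by (cases s; cases t; cases "last q") simp_all

text \<open>When the arc wraps around (from length 3 to 0 or back) the constant k absorbs the change.\<close>
lemma turn_balance_arc:
  assumes "directed p" and "p \<noteq> []"
  shows "\<exists>k. \<forall>s. turn_balance p s = k + (if cw_dist (hd p) s < cw_dist (hd p) (last p) then 1 else 0)"
  using assms
proof (induction p rule: rev_induct)
  case Nil
  then show ?case by simp
next
  case (snoc t q)
  show ?case
  proof (cases "q = []")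
    case True
    then show ?thesis by (intro exI[of _ 0]) (simp add: turn_balance_def turns_singleton cw_dist_eq)
  next
    case False
    let ?a = "hd q" and ?b = "last q"
    obtain k where k: "\<forall>s. turn_balance q s = k + (if cw_dist ?a s < cw_dist ?a ?b then 1 else 0)"
      using snoc.IH directed_snocD(1)[OF snoc.prems(1)] False by blast
    have not_back: "t \<noteq> opposite ?b" using directed_snocD(2)[OF snoc.prems(1) False] .
    define k' where "k' = k + (if t = cw ?b \<and> cw_dist ?a ?b = 3 then 1
        else if ?b = cw t \<and> cw_dist ?a ?b = 0 then -1 else 0)"
    show ?thesis
    proof (intro exI[of _ k'] allI)
      fix s
      show "turn_balance (q @ [t]) s
          = k' + (if cw_dist (hd (q @ [t])) s < cw_dist (hd (q @ [t])) (last (q @ [t])) then 1 else 0)"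
        using k[rule_format, of s] not_back False
        unfolding turn_balance_snoc[OF False] k'_def cw_dist_eq
        by (cases s; cases t; cases ?a; cases ?b) simp_all
    qed
  qed
qed

section \<open>Lattice walks\<close>

fun move :: "int \<times> int \<Rightarrow> step \<Rightarrow> int \<times> int" where
  "move (x, y) U = (x, y + 1)"
| "move (x, y) R = (x + 1, y)"
| "move (x, y) D = (x, y - 1)"
| "move (x, y) L = (x - 1, y)"

fun edges :: "int \<times> int \<Rightarrow> step list \<Rightarrow> ((int \<times> int) \<times> step) list" where
  "edges z [] = []"
| "edges z (s # ss) = (z, s) # edges (move z s) ss"

fun endpoint :: "int \<times> int \<Rightarrow> step list \<Rightarrow> int \<times> int" where
  "endpoint z [] = z"
| "endpoint z (s # ss) = endpoint (move z s) ss"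

definition vertices :: "int \<times> int \<Rightarrow> step list \<Rightarrow> (int \<times> int) list" where
  "vertices z p = map fst (edges z p)"

definition heads :: "int \<times> int \<Rightarrow> step list \<Rightarrow> (int \<times> int) list" where
  "heads z p = map (\<lambda>(v, s). move v s) (edges z p)"

definition loop :: "int \<times> int \<Rightarrow> step list \<Rightarrow> bool" where
  "loop z p \<longleftrightarrow> endpoint z p = z \<and> distinct (vertices z p) \<and> p \<noteq> []"

definition simple_loop :: "int \<times> int \<Rightarrow> step list \<Rightarrow> bool" where
  "simple_loop z p \<longleftrightarrow> endpoint z p = z \<and> distinct (vertices z p) \<and> 3 \<le> length p"

lemma simple_loop_loop: "simple_loop z p \<Longrightarrow> loop z p"
  unfolding simple_loop_def loop_def by auto

lemma vertices_Nil [simp]: "vertices z [] = []"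
  by (simp add: vertices_def)

lemma vertices_Cons [simp]: "vertices z (s # ss) = z # vertices (move z s) ss"
  by (simp add: vertices_def)

lemma edges_append: "edges z (X @ Y) = edges z X @ edges (endpoint z X) Y"
  by (induction X arbitrary: z) auto

lemma endpoint_append [simp]: "endpoint z (X @ Y) = endpoint (endpoint z X) Y"
  by (induction X arbitrary: z) auto

lemma vertices_append: "vertices z (X @ Y) = vertices z X @ vertices (endpoint z X) Y"
  by (simp add: vertices_def edges_append)

lemma vertices_snoc: "vertices z (X @ [s]) = vertices z X @ [endpoint z X]"
  by (simp add: vertices_append)

lemma length_edges [simp]: "length (edges z p) = length p"
  by (induction p arbitrary: z) auto

lemma length_vertices [simp]: "length (vertices z p) = length p"
  by (simp add: vertices_def)

lemma move_opposite [simp]: "move (move v s) (opposite s) = v"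
  by (cases v; cases s) auto

lemma move_inject: "move v s = move v' s \<Longrightarrow> v = v'"
  by (cases v; cases v'; cases s) auto

lemma move_move_eq_self: "move (move v s) t = v \<Longrightarrow> t = opposite s"
  by (cases v; cases s; cases t) auto

lemma heads_eq: "heads z p = tl (vertices z p @ [endpoint z p])"
proof (induction p arbitrary: z)
  case Nil
  then show ?case by (simp add: heads_def)
next
  case (Cons s ss)
  have "heads z (s # ss) = move z s # heads (move z s) ss"
    by (simp add: heads_def)
  also have "\<dots> = vertices (move z s) ss @ [endpoint (move z s) ss]"
    using Cons by (cases ss) auto
  finally show ?case by simp
qed

lemma heads_closed: "endpoint z p = z \<Longrightarrow> heads z p = rotate1 (vertices z p)"
  by (cases p) (simp_all add: heads_eq)

lemma edge_tail_in_vertices: "(v, s) \<in> set (edges z p) \<Longrightarrow> v \<in> set (vertices z p)"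
  unfolding vertices_def by force

lemma edge_head_in_vertices:
  assumes "endpoint z p = z" and "(v, s) \<in> set (edges z p)"
  shows "move v s \<in> set (vertices z p)"
proof -
  have "move v s \<in> set (heads z p)"
    using assms(2) unfolding heads_def by force
  then show ?thesis using heads_closed[OF assms(1)] by simp
qed

lemma distinct_edges: "distinct (vertices z p) \<Longrightarrow> distinct (edges z p)"
  unfolding vertices_def using distinct_map by blast

lemma edge_tail_unique:
  assumes "distinct (vertices z p)" and "(v, s) \<in> set (edges z p)" and "(v, s') \<in> set (edges z p)"
  shows "s = s'"
proof -
  have "inj_on fst (set (edges z p))"
    using assms(1) unfolding vertices_def by (simp add: distinct_map)
  then show ?thesis using assms(2,3) by (metis fst_conv inj_onD prod.inject)
qed

lemma edge_head_unique:
  assumes "loop z p" and "(v, s) \<in> set (edges z p)" and "(v', s') \<in> set (edges z p)"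
    and "move v s = move v' s'"
  shows "v = v' \<and> s = s'"
proof -
  have "distinct (heads z p)"
    using heads_closed assms(1) unfolding loop_def by simp
  then have "inj_on (\<lambda>(v, s). move v s) (set (edges z p))"
    unfolding heads_def by (simp add: distinct_map)
  moreover have "(\<lambda>(v, s). move v s) (v, s) = (\<lambda>(v, s). move v s) (v', s')"
    using assms(4) by simp
  ultimately have "(v, s) = (v', s')" using assms(2,3) by (rule inj_onD)
  then show ?thesis by simp
qed

lemma not_in_edges_same_tail:
  "loop z p \<Longrightarrow> (v, s) \<in> set (edges z p) \<Longrightarrow> s' \<noteq> s \<Longrightarrow> (v, s') \<notin> set (edges z p)"
  using edge_tail_unique unfolding loop_def by blast

lemma not_in_edges_same_head:
  "loop z p \<Longrightarrow> (v, s) \<in> set (edges z p) \<Longrightarrow> move v' s' = move v s \<Longrightarrow> v' \<noteq> v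
    \<Longrightarrow> (v', s') \<notin> set (edges z p)"
  using edge_head_unique by blast

lemma not_in_edges_tail_free: "v \<notin> set (vertices z p) \<Longrightarrow> (v, s) \<notin> set (edges z p)"
  using edge_tail_in_vertices by blast

lemma not_in_edges_head_free:
  "loop z p \<Longrightarrow> move v s \<notin> set (vertices z p) \<Longrightarrow> (v, s) \<notin> set (edges z p)"
  using edge_head_in_vertices unfolding loop_def by blast

lemma hd_edge: "ss \<noteq> [] \<Longrightarrow> (w, hd ss) \<in> set (edges w ss)"
  by (cases ss) auto

lemma last_edge:
  assumes "ss \<noteq> []"
  shows "(endpoint w (butlast ss), last ss) \<in> set (edges w ss)"
    and "move (endpoint w (butlast ss)) (last ss) = endpoint w ss"
proof -
  have ss: "ss = butlast ss @ [last ss]" using assms by simp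
  have "edges w ss = edges w (butlast ss) @ [(endpoint w (butlast ss), last ss)]"
    by (subst ss) (simp add: edges_append)
  then show "(endpoint w (butlast ss), last ss) \<in> set (edges w ss)" by simp
  show "move (endpoint w (butlast ss)) (last ss) = endpoint w ss"
    by (subst (2) ss) simp
qed

lemma split_at_vertex:
  "v \<in> set (vertices z p) \<Longrightarrow> \<exists>X Y. p = X @ Y \<and> endpoint z X = v \<and> Y \<noteq> []"
proof (induction p arbitrary: z)
  case Nil
  then show ?case by simp
next
  case (Cons s ss)
  show ?case
  proof (cases "v = z")
    case True
    then show ?thesis by (intro exI[of _ "[]"] exI[of _ "s # ss"]) auto
  next
    case False
    then have "v \<in> set (vertices (move z s) ss)" using Cons.prems by simp
    then obtain X Y where "ss = X @ Y" "endpoint (move z s) X = v" "Y \<noteq> []"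
      using Cons.IH by blast
    then show ?thesis by (intro exI[of _ "s # X"] exI[of _ Y]) auto
  qed
qed

section \<open>Winding numbers, area and turning number of a loop\<close>

text \<open>winding z p (a, b) is the winding number of p around the centre of the unit cell with lower
  left corner (a, b), computed from the signed crossings of the upward vertical ray from that
  centre; it is -1 inside a simple clockwise loop.\<close>
fun ray_crossing :: "int \<times> int \<Rightarrow> (int \<times> int) \<times> step \<Rightarrow> int" where
  "ray_crossing (a, b) ((x, y), s) =
     (if s = R \<and> x = a \<and> b < y then -1 else if s = L \<and> x = a + 1 \<and> b < y then 1 else 0)"

definition winding :: "int \<times> int \<Rightarrow> step list \<Rightarrow> int \<times> int \<Rightarrow> int" where
  "winding z p c = sum_list (map (ray_crossing c) (edges z p))"

fun cross :: "(int \<times> int) \<times> step \<Rightarrow> int" where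
  "cross (v, s) = fst v * snd (move v s) - fst (move v s) * snd v"

definition area2 :: "int \<times> int \<Rightarrow> step list \<Rightarrow> int" where
  "area2 z p = sum_list (map cross (edges z p))"

definition turn :: "step \<Rightarrow> step \<Rightarrow> int" where
  "turn a b = (if b = cw a then 1 else if a = cw b then -1 else 0)"

fun adjacent_sum :: "('a \<Rightarrow> 'a \<Rightarrow> int) \<Rightarrow> 'a list \<Rightarrow> int" where
  "adjacent_sum f (a # b # xs) = f a b + adjacent_sum f (b # xs)"
| "adjacent_sum f _ = 0"

definition turning :: "step list \<Rightarrow> int" where
  "turning p = (if p = [] then 0 else adjacent_sum turn p + turn (last p) (hd p))"

text \<open>The invariant of the induction: the discrete Umlaufsatz, strengthened by the fact that every
  winding number is 0 or -\<sigma>.  The winding numbers are what allows the sign \<sigma> of a smaller loop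
  to be read off from a single cell.\<close>
definition umlauf :: "int \<times> int \<Rightarrow> step list \<Rightarrow> bool" where
  "umlauf z p \<longleftrightarrow> (\<exists>\<sigma>::int. (\<sigma> = 1 \<or> \<sigma> = -1) \<and> turning p = 4 * \<sigma>
      \<and> (\<forall>c. winding z p c = 0 \<or> winding z p c = - \<sigma>) \<and> \<sigma> * area2 z p < 0)"

lemma winding_Nil [simp]: "winding z [] c = 0"
  by (simp add: winding_def)

lemma winding_Cons: "winding z (s # ss) c = ray_crossing c (z, s) + winding (move z s) ss c"
  by (simp add: winding_def)

lemma winding_append: "winding z (X @ Y) c = winding z X c + winding (endpoint z X) Y c"
  by (simp add: winding_def edges_append)

lemma area2_Nil [simp]: "area2 z [] = 0"
  by (simp add: area2_def)

lemma area2_Cons: "area2 z (s # ss) = cross (z, s) + area2 (move z s) ss"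
  by (simp add: area2_def)

lemma area2_append: "area2 z (X @ Y) = area2 z X + area2 (endpoint z X) Y"
  by (simp add: area2_def edges_append)

lemma adjacent_sum_Cons: "xs \<noteq> [] \<Longrightarrow> adjacent_sum f (a # xs) = f a (hd xs) + adjacent_sum f xs"
  by (cases xs) auto

lemma adjacent_sum_append:
  "X \<noteq> [] \<Longrightarrow> Y \<noteq> [] \<Longrightarrow>
    adjacent_sum f (X @ Y) = adjacent_sum f X + f (last X) (hd Y) + adjacent_sum f Y"
  by (induction X rule: induct_list012) (auto simp: adjacent_sum_Cons)

lemma adjacent_sum_map: "adjacent_sum f (map h xs) = adjacent_sum (\<lambda>a b. f (h a) (h b)) xs"
  by (induction xs rule: induct_list012) auto

lemma adjacent_sum_rev: "adjacent_sum f (rev xs) = adjacent_sum (\<lambda>a b. f b a) xs"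
proof (induction xs)
  case Nil
  then show ?case by simp
next
  case (Cons a xs)
  show ?case
  proof (cases "xs = []")
    case True
    then show ?thesis by simp
  next
    case False
    then have "adjacent_sum f (rev (a # xs)) = adjacent_sum f (rev xs) + f (last (rev xs)) a"
      using adjacent_sum_append[of "rev xs" "[a]" f] by simp
    then show ?thesis using Cons.IH False by (simp add: last_rev adjacent_sum_Cons)
  qed
qed

lemma turning_Cons_Cons:
  "ss \<noteq> [] \<Longrightarrow> turning (x # y # ss) = turn x y + turn y (hd ss) + adjacent_sum turn ss + turn (last ss) x"
  unfolding turning_def by (cases ss) auto

lemma turning_Cons_Cons_snoc:
  assumes "ss \<noteq> []"
  shows "turning (x # y # ss @ [t])
           = turn x y + turn y (hd ss) + adjacent_sum turn ss + turn (last ss) t + turn t x"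
  using turning_Cons_Cons[of "ss @ [t]" x y] adjacent_sum_append[OF assms, of "[t]" turn] assms
  by simp

lemma turning_snoc:
  "Y \<noteq> [] \<Longrightarrow> turning (Y @ [t]) = adjacent_sum turn Y + turn (last Y) t + turn t (hd Y)"
  unfolding turning_def using adjacent_sum_append[of Y "[t]" turn] by simp

lemma turning_Cons_Cons_append:
  "X \<noteq> [] \<Longrightarrow> Y \<noteq> [] \<Longrightarrow> turning (x # y # X @ Y)
     = turn x y + turn y (hd X) + adjacent_sum turn X + turn (last X) (hd Y) + adjacent_sum turn Y
       + turn (last Y) x"
  using turning_Cons_Cons[of "X @ Y" x y] adjacent_sum_append[of X Y turn] by simp

lemma turning_rotate: "turning (X @ Y) = turning (Y @ X)"
proof (cases "X = [] \<or> Y = []")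
  case True
  then show ?thesis by auto
next
  case False
  then show ?thesis
    unfolding turning_def using adjacent_sum_append[of X Y turn] adjacent_sum_append[of Y X turn]
    by auto
qed

lemma simple_loop_rotate: "simple_loop z (X @ Y) \<Longrightarrow> simple_loop (endpoint z X) (Y @ X)"
  unfolding simple_loop_def by (auto simp: vertices_append)

lemma set_vertices_rotate:
  "endpoint z (X @ Y) = z \<Longrightarrow> set (vertices (endpoint z X) (Y @ X)) = set (vertices z (X @ Y))"
  by (auto simp: vertices_append)

lemma umlauf_rotate:
  assumes "endpoint z (X @ Y) = z"
  shows "umlauf (endpoint z X) (Y @ X) \<longleftrightarrow> umlauf z (X @ Y)"
proof -
  have "sum_list (map f (edges (endpoint z X) (Y @ X))) = sum_list (map f (edges z (X @ Y)))"
    for f :: "(int \<times> int) \<times> step \<Rightarrow> int"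
    using assms by (simp add: edges_append)
  then show ?thesis unfolding umlauf_def winding_def area2_def turning_rotate[of X] by metis
qed

definition reverse_walk :: "step list \<Rightarrow> step list" where
  "reverse_walk p = map opposite (rev p)"

lemma edges_reverse_walk:
  "edges (endpoint z p) (reverse_walk p) = rev (map (\<lambda>(v, s). (move v s, opposite s)) (edges z p))"
  by (induction p rule: rev_induct) (simp_all add: reverse_walk_def edges_append)

lemma endpoint_reverse_walk: "endpoint (endpoint z p) (reverse_walk p) = z"
  by (induction p arbitrary: z rule: rev_induct) (simp_all add: reverse_walk_def)

lemma vertices_reverse_walk:
  "endpoint z p = z \<Longrightarrow> vertices z (reverse_walk p) = rev (heads z p)"
  using edges_reverse_walk[of z p]
  by (simp add: vertices_def heads_def rev_map case_prod_unfold comp_def)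

lemma winding_reverse_walk: "endpoint z p = z \<Longrightarrow> winding z (reverse_walk p) c = - winding z p c"
proof -
  have "ray_crossing c (move v s, opposite s) = - ray_crossing c (v, s)" for v s
    by (cases c; cases v; cases s) auto
  moreover assume "endpoint z p = z"
  ultimately show ?thesis using edges_reverse_walk[of z p] unfolding winding_def
    by (simp add: rev_map[symmetric] uminus_sum_list_map comp_def case_prod_unfold)
qed

lemma area2_reverse_walk: "endpoint z p = z \<Longrightarrow> area2 z (reverse_walk p) = - area2 z p"
proof -
  have "cross (move v s, opposite s) = - cross (v, s)" for v s
    by (cases v; cases s) (auto simp: algebra_simps)
  moreover assume "endpoint z p = z"
  ultimately show ?thesis using edges_reverse_walk[of z p] unfolding area2_def
    by (simp add: rev_map[symmetric] uminus_sum_list_map comp_def case_prod_unfold del: cross.simps)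
qed

lemma turn_opposite: "turn (opposite b) (opposite a) = - turn a b"
  by (cases a; cases b) (auto simp: turn_def)

lemma turning_reverse_walk: "turning (reverse_walk p) = - turning p"
proof (cases "p = []")
  case True
  then show ?thesis by (simp add: turning_def reverse_walk_def)
next
  case False
  have "adjacent_sum turn (reverse_walk p) = - adjacent_sum turn p"
    unfolding reverse_walk_def adjacent_sum_map adjacent_sum_rev turn_opposite
    by (induction turn p rule: adjacent_sum.induct) auto
  then show ?thesis using False unfolding turning_def
    by (simp add: reverse_walk_def hd_map last_map hd_rev last_rev turn_opposite)
qed

lemma simple_loop_reverse_walk:
  assumes "simple_loop z p"
  shows "simple_loop z (reverse_walk p)"
proof -
  have closed: "endpoint z p = z" and "distinct (vertices z p)"
    using assms unfolding simple_loop_def by auto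
  then have "distinct (vertices z (reverse_walk p))"
    unfolding vertices_reverse_walk[OF closed] heads_closed[OF closed] by simp
  then show ?thesis
    using assms endpoint_reverse_walk[of z p] unfolding simple_loop_def by (simp add: reverse_walk_def)
qed

lemma set_vertices_reverse_walk:
  "endpoint z p = z \<Longrightarrow> set (vertices z (reverse_walk p)) = set (vertices z p)"
  by (simp add: vertices_reverse_walk heads_closed)

lemma umlauf_reverse_walkD:
  assumes "endpoint z p = z" and "umlauf z (reverse_walk p)"
  shows "umlauf z p"
proof -
  obtain \<sigma> :: int where "(\<sigma> = 1 \<or> \<sigma> = -1) \<and> turning (reverse_walk p) = 4 * \<sigma>
      \<and> (\<forall>c. winding z (reverse_walk p) c = 0 \<or> winding z (reverse_walk p) c = - \<sigma>)
      \<and> \<sigma> * area2 z (reverse_walk p) < 0"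
    using assms(2) unfolding umlauf_def by blast
  then show ?thesis
    unfolding umlauf_def turning_reverse_walk winding_reverse_walk[OF assms(1)]
      area2_reverse_walk[OF assms(1)]
    by (intro exI[of _ "- \<sigma>"]) auto
qed

lemma sum_list_indicator:
  "distinct xs \<Longrightarrow> sum_list (map (\<lambda>x. if x = y then c else 0) xs) = (if y \<in> set xs then c else (0::int))"
  by (induction xs) auto

lemma winding_vertical_step:
  assumes "distinct (vertices z p)"
  shows "winding z p (a, b) = winding z p (a, b + 1)
           + (if ((a, b + 1), R) \<in> set (edges z p) then -1 else 0)
           + (if ((a + 1, b + 1), L) \<in> set (edges z p) then 1 else 0)"
proof -
  have "ray_crossing (a, b) e = ray_crossing (a, b + 1) e
      + (if e = ((a, b + 1), R) then -1 else 0) + (if e = ((a + 1, b + 1), L) then 1 else 0)" for e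
    by (cases e) (auto split: if_splits)
  then have "winding z p (a, b) = sum_list (map (\<lambda>e. ray_crossing (a, b + 1) e
      + (if e = ((a, b + 1), R) then -1 else 0) + (if e = ((a + 1, b + 1), L) then 1 else 0))
      (edges z p))"
    unfolding winding_def by metis
  then show ?thesis
    unfolding sum_list_addf sum_list_indicator[OF distinct_edges[OF assms]] winding_def
    by simp
qed

definition quadrant :: "int \<Rightarrow> int \<Rightarrow> int \<times> int \<Rightarrow> int" where
  "quadrant a b v = (if a \<le> fst v \<and> b \<le> snd v then 1 else 0)"

lemma sum_edges_telescope:
  "sum_list (map (\<lambda>(v, s). G (move v s) - G v) (edges z p)) = G (endpoint z p) - (G z :: int)"
  by (induction p arbitrary: z) auto

text \<open>Moving the ray one column to the right changes each crossing count by the increment of a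
  difference of two quadrant indicators along the edge, and these increments telescope to 0 around
  a closed walk.\<close>
lemma winding_horizontal_step:
  assumes "distinct (vertices z p)" and "endpoint z p = z"
  shows "winding z p (a + 1, b) = winding z p (a, b)
           + (if ((a + 1, b), U) \<in> set (edges z p) then -1 else 0)
           + (if ((a + 1, b + 1), D) \<in> set (edges z p) then 1 else 0)"
proof -
  let ?G = "\<lambda>v. quadrant (a + 1) (b + 1) v - quadrant (a + 2) (b + 1) v"
  have "ray_crossing (a + 1, b) e = ray_crossing (a, b) e
      + (if e = ((a + 1, b), U) then -1 else 0) + (if e = ((a + 1, b + 1), D) then 1 else 0)
      + (case e of (v, s) \<Rightarrow> ?G (move v s) - ?G v)" for e
  proof -
    obtain x y s where e: "e = ((x, y), s)" by (metis surj_pair)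
    show ?thesis unfolding e by (cases s) (auto simp: quadrant_def)
  qed
  then have "winding z p (a + 1, b) = sum_list (map (\<lambda>e. ray_crossing (a, b) e
      + (if e = ((a + 1, b), U) then -1 else 0) + (if e = ((a + 1, b + 1), D) then 1 else 0)
      + (case e of (v, s) \<Rightarrow> ?G (move v s) - ?G v)) (edges z p))"
    unfolding winding_def by metis
  moreover have "sum_list (map (\<lambda>(v, s). ?G (move v s) - ?G v) (edges z p)) = 0"
    using sum_edges_telescope[of ?G z p] assms(2) by simp
  ultimately show ?thesis
    unfolding sum_list_addf sum_list_indicator[OF distinct_edges[OF assms(1)]] winding_def
    by simp
qed

lemma winding_vertical_step':
  "distinct (vertices z p) \<Longrightarrow> winding z p (a, b - 1) = winding z p (a, b)
     + (if ((a, b), R) \<in> set (edges z p) then -1 else 0)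
     + (if ((a + 1, b), L) \<in> set (edges z p) then 1 else 0)"
  using winding_vertical_step[of z p a "b - 1"] by simp

lemma winding_horizontal_step':
  "distinct (vertices z p) \<Longrightarrow> endpoint z p = z \<Longrightarrow> winding z p (a, b) = winding z p (a - 1, b)
     + (if ((a, b), U) \<in> set (edges z p) then -1 else 0)
     + (if ((a, b + 1), D) \<in> set (edges z p) then 1 else 0)"
  using winding_horizontal_step[of z p "a - 1" b] by simp

lemma winding_around_free_vertex:
  assumes "loop z p" and "(x, y) \<notin> set (vertices z p)"
  shows "winding z p (x - 1, y - 1) = winding z p (x, y)"
    and "winding z p (x, y - 1) = winding z p (x, y)"
    and "winding z p (x - 1, y) = winding z p (x, y)"
proof -
  have closed: "endpoint z p = z" and distinct: "distinct (vertices z p)"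
    using assms(1) unfolding loop_def by auto
  have "((x, y), s) \<notin> set (edges z p)" for s
    using not_in_edges_tail_free[OF assms(2)] .
  moreover have "((x + 1, y), L) \<notin> set (edges z p)" and "((x - 1, y), R) \<notin> set (edges z p)"
    and "((x, y + 1), D) \<notin> set (edges z p)"
    using not_in_edges_head_free[OF assms(1), of "(x + 1, y)" L]
      not_in_edges_head_free[OF assms(1), of "(x - 1, y)" R]
      not_in_edges_head_free[OF assms(1), of "(x, y + 1)" D] assms(2)
    by simp_all
  ultimately show "winding z p (x - 1, y - 1) = winding z p (x, y)"
    and "winding z p (x, y - 1) = winding z p (x, y)"
    and "winding z p (x - 1, y) = winding z p (x, y)"
    using winding_vertical_step'[OF distinct, of x y] winding_vertical_step'[OF distinct, of "x - 1" y]
      winding_horizontal_step'[OF distinct closed, of x y]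
    by simp_all
qed

lemma winding_free_move:
  assumes "loop z p" and "v \<notin> set (vertices z p)" and "move v s \<notin> set (vertices z p)"
  shows "winding z p (move v s) = winding z p v"
proof -
  obtain x y where v: "v = (x, y)" by (metis surj_pair)
  show ?thesis
    using winding_around_free_vertex(2,3)[OF assms(1), of x "y + 1"]
      winding_around_free_vertex(2,3)[OF assms(1), of "x + 1" y]
      winding_around_free_vertex(2,3)[OF assms(1), of x y] assms(2,3) v
    by (cases s) simp_all
qed

lemma winding_free_walk:
  assumes "loop z p" and "set (vertices w ss) \<inter> set (vertices z p) = {}"
    and "u \<in> set (vertices w ss)"
  shows "winding z p u = winding z p w"
  using assms(2,3)
proof (induction ss arbitrary: w)
  case Nil
  then show ?case by simp
next
  case (Cons s ss)
  show ?case
  proof (cases "u = w \<or> ss = []")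
    case True
    then show ?thesis using Cons.prems(2) by auto
  next
    case False
    then have "move w s \<in> set (vertices (move w s) ss)" by (cases ss) auto
    then have "move w s \<notin> set (vertices z p)" and "w \<notin> set (vertices z p)"
      using Cons.prems(1) by auto
    then have "winding z p (move w s) = winding z p w"
      using winding_free_move[OF assms(1)] by blast
    moreover have "winding z p u = winding z p (move w s)"
      using Cons.IH Cons.prems False by auto
    ultimately show ?thesis by simp
  qed
qed

lemma winding_below_free_walk:
  assumes "loop z p" and "set (vertices w ss) \<inter> set (vertices z p) = {}"
    and "winding z p w = 0" and "(x, y) \<in> set (vertices w ss)"
  shows "winding z p (x, y - 1) = 0"
  using winding_free_walk[OF assms(1,2,4)] winding_around_free_vertex(2)[OF assms(1), of x y] assms
  by auto

lemma winding_above: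
  assumes "\<forall>u \<in> set (vertices z p). snd u \<le> b"
  shows "winding z p (a, b) = 0"
proof -
  have vanish: "ray_crossing (a, b) e = 0" if "e \<in> set (edges z p)" for e
  proof -
    obtain x y s where e: "e = ((x, y), s)" by (metis surj_pair)
    then have "y \<le> b" using that assms edge_tail_in_vertices by fastforce
    then show ?thesis using e by auto
  qed
  have "map (ray_crossing (a, b)) (edges z p) = map (\<lambda>_. 0) (edges z p)"
    by (rule map_cong[OF refl vanish])
  then show ?thesis unfolding winding_def by (simp only: sum_list_0)
qed

section \<open>Local moves at a top corner\<close>

text \<open>In this section (a, b + 1) is a vertex of maximal height, the loop passes through it with the
  steps U, R, and the unit cell with lower left corner (a, b) is the one in the corner.\<close>

lemma umlauf_add_cell:
  assumes "umlauf z1 p1" and "winding z1 p1 c0 = -1" and "winding z1 p1 c = 0"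
    and "turning p = turning p1"
    and "\<forall>c'. winding z p c' = winding z1 p1 c' + (if c' = c then -1 else 0)"
    and "area2 z p = area2 z1 p1 - 2"
  shows "umlauf z p"
proof -
  obtain \<sigma> :: int where \<sigma>: "\<sigma> = 1 \<or> \<sigma> = -1" "turning p1 = 4 * \<sigma>"
    "\<forall>c. winding z1 p1 c = 0 \<or> winding z1 p1 c = - \<sigma>" "\<sigma> * area2 z1 p1 < 0"
    using assms(1) unfolding umlauf_def by blast
  have "\<sigma> = 1" using \<sigma>(1) \<sigma>(3)[rule_format, of c0] assms(2) by auto
  then show ?thesis
    unfolding umlauf_def using \<sigma> assms(3-6) by (intro exI[of _ 1]) auto
qed

lemma windings_under_top_edge:
  assumes "loop z p" and "\<forall>v \<in> set (vertices z p). snd v \<le> b + 1"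
    and "(a, b + 1) \<notin> set (vertices z p)"
    and "((a, b), R) \<in> set (edges z p)" and "((a + 1, b), L) \<notin> set (edges z p)"
  shows "winding z p (a, b) = 0" and "winding z p (a, b - 1) = -1"
proof -
  have distinct: "distinct (vertices z p)" using assms(1) unfolding loop_def by simp
  have "((a, b + 1), R) \<notin> set (edges z p)" and "((a + 1, b + 1), L) \<notin> set (edges z p)"
    using not_in_edges_tail_free[OF assms(3)] not_in_edges_head_free[OF assms(1), of "(a + 1, b + 1)" L]
      assms(3) by simp_all
  then show "winding z p (a, b) = 0"
    using winding_vertical_step[OF distinct, of a b] winding_above[OF assms(2)] by simp
  then show "winding z p (a, b - 1) = -1"
    using winding_vertical_step'[OF distinct, of a b] assms(4,5) by simp
qed

lemma umlauf_add_top_cell: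
  assumes "umlauf z' p'" and "loop z' p'" and "\<forall>v \<in> set (vertices z' p'). snd v \<le> b + 1"
    and "(a, b + 1) \<notin> set (vertices z' p')"
    and "((a, b), R) \<in> set (edges z' p')" and "((a + 1, b), L) \<notin> set (edges z' p')"
    and "turning p = turning p'"
    and "\<forall>c. winding z p c = winding z' p' c + (if c = (a, b) then -1 else 0)"
    and "area2 z p = area2 z' p' - 2"
  shows "umlauf z p"
  using umlauf_add_cell[OF assms(1) _ _ assms(7-9)] windings_under_top_edge[OF assms(2-6)] by blast

lemma corner_facts:
  assumes "simple_loop (a, b) (U # R # ss)"
  shows "loop (a, b) (U # R # ss)" and "endpoint (a + 1, b + 1) ss = (a, b)" and "ss \<noteq> []"
    and "distinct ((a, b) # (a, b + 1) # vertices (a + 1, b + 1) ss)"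
    and "set (edges (a + 1, b + 1) ss) \<subseteq> set (edges (a, b) (U # R # ss))"
  using assms unfolding simple_loop_def loop_def by auto

lemma corner_hd_last:
  assumes "simple_loop (a, b) (U # R # ss)"
  shows "hd ss \<noteq> L" and "last ss \<noteq> D"
    and "last ss = L \<Longrightarrow> ((a + 1, b), L) \<in> set (edges (a, b) (U # R # ss))"
proof -
  note corner = corner_facts[OF assms]
  have "((a + 1, b + 1), hd ss) \<in> set (edges (a, b) (U # R # ss))"
    using hd_edge[OF corner(3)] corner(5) by blast
  moreover have "((a + 1, b + 1), L) \<notin> set (edges (a, b) (U # R # ss))"
    using not_in_edges_same_head[OF corner(1), of "(a, b)" U "(a + 1, b + 1)" L] by simp
  ultimately show "hd ss \<noteq> L" by auto
  define u where "u = endpoint (a + 1, b + 1) (butlast ss)"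
  have last_edge_in: "(u, last ss) \<in> set (edges (a, b) (U # R # ss))"
    using last_edge(1)[OF corner(3)] corner(5) u_def by blast
  have to_start: "move u (last ss) = (a, b)"
    using last_edge(2)[OF corner(3)] corner(2) u_def by simp
  show "last ss \<noteq> D"
  proof
    assume "last ss = D"
    then have "u = (a, b + 1)" using to_start move_inject[of u D "(a, b + 1)"] by simp
    then show False
      using last_edge_in not_in_edges_same_tail[OF corner(1), of "(a, b + 1)" R D] \<open>last ss = D\<close>
      by simp
  qed
  assume "last ss = L"
  then have "u = (a + 1, b)" using to_start move_inject[of u L "(a + 1, b)"] by simp
  then show "((a + 1, b), L) \<in> set (edges (a, b) (U # R # ss))"
    using last_edge_in \<open>last ss = L\<close> by simp
qed

lemma winding_flip_corner:
  "winding (a, b) (U # R # ss) c = winding (a, b) (R # U # ss) c + (if c = (a, b) then -1 else 0)"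
  by (cases c) (auto simp: winding_Cons)

definition height_sum :: "(int \<times> int) set \<Rightarrow> nat" where
  "height_sum S = (\<Sum>v\<in>S. nat (snd v - Min (snd ` S)))"

lemma height_sum_lower_vertex:
  assumes "finite S" and "A \<notin> S" and "P \<notin> S" and "Q \<notin> S" and "A \<noteq> P" and "A \<noteq> Q" and "P \<noteq> Q"
    and "snd Q = snd A" and "snd P = snd A + 1"
  shows "height_sum (insert A (insert Q S)) < height_sum (insert A (insert P S))"
proof -
  let ?S0 = "insert A (insert P S)" and ?S1 = "insert A (insert Q S)"
  define m where "m = Min (snd ` ?S0)"
  have finite: "finite (snd ` ?S0)" "finite (snd ` ?S1)" using assms(1) by auto
  have "m \<in> snd ` ?S0" unfolding m_def using finite by (intro Min_in) auto
  moreover have "m \<le> snd A" unfolding m_def using finite by simp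
  ultimately have "m \<in> snd ` ?S1" using assms(9) by auto
  then have "Min (snd ` ?S1) \<le> m" using finite(2) Min_le by blast
  moreover have "m \<le> Min (snd ` ?S1)"
    unfolding m_def using assms(8) finite by (intro Min_antimono) auto
  ultimately have "Min (snd ` ?S1) = m" by simp
  then show ?thesis
    unfolding height_sum_def m_def[symmetric] using assms \<open>m \<le> snd A\<close> by simp
qed

text \<open>Flipping U, R into R, U lowers one vertex and removes the corner cell.\<close>
lemma corner_flip:
  assumes loop: "simple_loop (a, b) (U # R # ss)"
    and top: "\<forall>v \<in> set (vertices (a, b) (U # R # ss)). snd v \<le> b + 1"
    and free: "(a + 1, b) \<notin> set (vertices (a, b) (U # R # ss))"
  shows "simple_loop (a, b) (R # U # ss)"
    and "height_sum (set (vertices (a, b) (R # U # ss))) < height_sum (set (vertices (a, b) (U # R # ss)))"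
    and "umlauf (a, b) (R # U # ss) \<Longrightarrow> umlauf (a, b) (U # R # ss)"
proof -
  note corner = corner_facts[OF loop]
  have vertices: "vertices (a, b) (R # U # ss) = (a, b) # (a + 1, b) # vertices (a + 1, b + 1) ss"
    by simp
  show flipped: "simple_loop (a, b) (R # U # ss)"
    using corner free loop unfolding simple_loop_def vertices by auto
  show "height_sum (set (vertices (a, b) (R # U # ss))) < height_sum (set (vertices (a, b) (U # R # ss)))"
    unfolding vertices using corner(4) free by (simp add: height_sum_lower_vertex)
  assume umlauf: "umlauf (a, b) (R # U # ss)"
  have "hd ss \<noteq> D"
  proof
    assume "hd ss = D"
    have "((a + 1, b + 1), hd ss) \<in> set (edges (a, b) (U # R # ss))"
      using hd_edge[OF corner(3)] corner(5) by blast
    then have "move (a + 1, b + 1) (hd ss) \<in> set (vertices (a, b) (U # R # ss))"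
      using edge_head_in_vertices corner(1) unfolding loop_def by blast
    then show False using free \<open>hd ss = D\<close> by simp
  qed
  moreover have "last ss \<noteq> L"
    using corner_hd_last(3)[OF loop] free edge_tail_in_vertices by blast
  ultimately have "turning (U # R # ss) = turning (R # U # ss)"
    unfolding turning_Cons_Cons[OF corner(3)] using corner_hd_last(1,2)[OF loop]
    by (cases "hd ss"; cases "last ss") (auto simp: turn_def)
  then show "umlauf (a, b) (U # R # ss)"
  proof (rule umlauf_add_top_cell[OF umlauf simple_loop_loop[OF flipped], rotated 4])
    show "\<forall>v \<in> set (vertices (a, b) (R # U # ss)). snd v \<le> b + 1"
      using top by (auto simp: vertices)
    show "(a, b + 1) \<notin> set (vertices (a, b) (R # U # ss))"
      using corner(4) by (auto simp: vertices)
    show "((a + 1, b), L) \<notin> set (edges (a, b) (R # U # ss))"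
      using not_in_edges_same_tail[OF simple_loop_loop[OF flipped], of "(a + 1, b)" U L] by simp
    show "area2 (a, b) (U # R # ss) = area2 (a, b) (R # U # ss) - 2"
      unfolding area2_Cons by (simp add: algebra_simps)
  qed (simp_all add: winding_flip_corner)
qed

lemma unit_square_umlauf: "umlauf (a, b) [U, R, D, L]"
proof -
  have "winding (a, b) [U, R, D, L] c = 0 \<or> winding (a, b) [U, R, D, L] c = -1" for c
    by (cases c) (auto simp: winding_Cons)
  moreover have "turning [U, R, D, L] = 4" by (simp add: turning_def turn_def)
  moreover have "area2 (a, b) [U, R, D, L] = -2"
    unfolding area2_Cons by (simp add: algebra_simps)
  ultimately show ?thesis unfolding umlauf_def by (intro exI[of _ 1]) auto
qed

lemma cut_cell_steps:
  assumes loop: "simple_loop (a, b) (U # R # D # rest)" and not_square: "rest \<noteq> [L]"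
  obtains r1 r' where "rest = r1 # r'" and "r' \<noteq> []" and "r1 \<noteq> L" and "r1 \<noteq> U"
    and "last rest \<noteq> D" and "last rest \<noteq> L"
proof -
  note corner = corner_facts[OF loop]
  have closed: "endpoint (a + 1, b) rest = (a, b)" using corner(2) by simp
  obtain r1 r' where rest: "rest = r1 # r'" using closed by (cases rest) auto
  have "r' \<noteq> []"
  proof
    assume "r' = []"
    then have "move (a + 1, b) r1 = (a, b)" using closed rest by simp
    then have "r1 = L" by (cases r1) auto
    then show False using not_square rest \<open>r' = []\<close> by simp
  qed
  then have "move (a + 1, b) r1 \<in> set (vertices (a + 1, b) rest)"
    using rest by (cases r') auto
  then have "r1 \<noteq> L" and "r1 \<noteq> U" using corner(4) by auto
  moreover have "last rest \<noteq> D" using corner_hd_last(2)[OF loop] rest by simp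
  moreover have "last rest \<noteq> L"
    using corner_hd_last(3)[OF loop] edge_tail_unique[of "(a, b)" "U # R # D # rest" "(a + 1, b)" L r1]
      corner(1) \<open>r1 \<noteq> L\<close> rest
    unfolding loop_def by auto
  ultimately show ?thesis using that rest \<open>r' \<noteq> []\<close> by blast
qed

lemma corner_cut_cell:
  assumes loop: "simple_loop (a, b) (U # R # D # rest)"
    and top: "\<forall>v \<in> set (vertices (a, b) (U # R # D # rest)). snd v \<le> b + 1"
    and not_square: "rest \<noteq> [L]"
  shows "simple_loop (a, b) (R # rest)"
    and "umlauf (a, b) (R # rest) \<Longrightarrow> umlauf (a, b) (U # R # D # rest)"
proof -
  obtain r1 r' where rest: "rest = r1 # r'" and "r' \<noteq> []" and "r1 \<noteq> L" and "r1 \<noteq> U"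
    and "last rest \<noteq> D" and "last rest \<noteq> L"
    using cut_cell_steps[OF loop not_square] .
  have closed: "endpoint (a + 1, b) rest = (a, b)" using corner_facts(2)[OF loop] by simp
  have distinct: "distinct ((a, b) # (a, b + 1) # (a + 1, b + 1) # vertices (a + 1, b) rest)"
    using corner_facts(4)[OF loop] by simp
  have vertices: "vertices (a, b) (R # rest) = (a, b) # vertices (a + 1, b) rest" by simp
  show cut: "simple_loop (a, b) (R # rest)"
    unfolding simple_loop_def vertices using distinct closed rest \<open>r' \<noteq> []\<close>
    by (cases r') auto
  assume umlauf: "umlauf (a, b) (R # rest)"
  have "turning (U # R # D # rest) = turning (R # rest)"
    using rest \<open>r' \<noteq> []\<close> \<open>r1 \<noteq> L\<close> \<open>r1 \<noteq> U\<close> \<open>last rest \<noteq> D\<close> \<open>last rest \<noteq> L\<close>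
    unfolding turning_def by (cases r1; cases "last rest"; cases r') (auto simp: turn_def)
  then show "umlauf (a, b) (U # R # D # rest)"
  proof (rule umlauf_add_top_cell[OF umlauf simple_loop_loop[OF cut], rotated 4])
    show "\<forall>v \<in> set (vertices (a, b) (R # rest)). snd v \<le> b + 1"
      using top by (auto simp: vertices)
    show "(a, b + 1) \<notin> set (vertices (a, b) (R # rest))"
      using distinct by (auto simp: vertices)
    show "((a + 1, b), L) \<notin> set (edges (a, b) (R # rest))"
      using not_in_edges_same_tail[OF simple_loop_loop[OF cut], of "(a + 1, b)" r1 L] rest \<open>r1 \<noteq> L\<close>
      by simp
    show "area2 (a, b) (U # R # D # rest) = area2 (a, b) (R # rest) - 2"
      unfolding area2_Cons by (simp add: algebra_simps)
    show "\<forall>c. winding (a, b) (U # R # D # rest) c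
        = winding (a, b) (R # rest) c + (if c = (a, b) then -1 else 0)"
      by (auto simp: winding_Cons)
  qed simp
qed

lemma shortcut_steps:
  assumes loop: "simple_loop (a, b) (U # R # ss @ [L])" and not_down: "hd (ss @ [L]) \<noteq> D"
  obtains s1 s' where "ss = s1 # s'" and "s' \<noteq> []" and "s1 \<noteq> D" and "s1 \<noteq> L"
    and "last ss \<noteq> R" and "last ss \<noteq> D"
proof -
  note corner = corner_facts[OF loop]
  have closed: "endpoint (a + 1, b + 1) ss = (a + 1, b)"
    using corner(2) move_inject[of "endpoint (a + 1, b + 1) ss" L "(a + 1, b)"] by simp
  obtain s1 s' where ss: "ss = s1 # s'" using closed by (cases ss) auto
  have "s1 \<noteq> D" using not_down ss by simp
  have "s1 \<noteq> L" using corner_hd_last(1)[OF loop] ss by simp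
  have "s' \<noteq> []"
  proof
    assume "s' = []"
    then have "move (a + 1, b + 1) s1 = (a + 1, b)" using closed ss by simp
    then show False using \<open>s1 \<noteq> D\<close> by (cases s1) auto
  qed
  define u where "u = endpoint (a + 1, b + 1) (butlast ss)"
  have "ss \<noteq> []" using ss by simp
  then have last_in: "(u, last ss) \<in> set (edges (a, b) (U # R # ss @ [L]))"
    and to_end: "move u (last ss) = (a + 1, b)"
    using last_edge[of ss "(a + 1, b + 1)"] u_def closed by (simp_all add: edges_append)
  have "last ss \<noteq> R"
  proof
    assume "last ss = R"
    then have "u = (a, b)" using to_end move_inject[of u R "(a, b)"] by simp
    then show False
      using last_in not_in_edges_same_tail[OF corner(1), of "(a, b)" U R] \<open>last ss = R\<close> by simp
  qed
  moreover have "last ss \<noteq> D"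
  proof
    assume "last ss = D"
    then have "u = (a + 1, b + 1)" using to_end move_inject[of u D "(a + 1, b + 1)"] by simp
    moreover have "((a + 1, b + 1), s1) \<in> set (edges (a, b) (U # R # ss @ [L]))" using ss by simp
    ultimately show False
      using last_in edge_tail_unique corner(1) \<open>s1 \<noteq> D\<close> \<open>last ss = D\<close> unfolding loop_def by blast
  qed
  ultimately show ?thesis using that ss \<open>s' \<noteq> []\<close> \<open>s1 \<noteq> D\<close> \<open>s1 \<noteq> L\<close> by blast
qed

lemma corner_shortcut:
  assumes loop: "simple_loop (a, b) (U # R # ss @ [L])"
    and top: "\<forall>v \<in> set (vertices (a, b) (U # R # ss @ [L])). snd v \<le> b + 1"
    and not_down: "hd (ss @ [L]) \<noteq> D"
  shows "simple_loop (a + 1, b) (U # ss)"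
    and "umlauf (a + 1, b) (U # ss) \<Longrightarrow> umlauf (a, b) (U # R # ss @ [L])"
proof -
  obtain s1 s' where ss: "ss = s1 # s'" and "s' \<noteq> []" and "s1 \<noteq> D" and "s1 \<noteq> L"
    and "last ss \<noteq> R" and "last ss \<noteq> D"
    using shortcut_steps[OF loop not_down] .
  have closed: "endpoint (a + 1, b + 1) ss = (a + 1, b)"
    using corner_facts(2)[OF loop] move_inject[of "endpoint (a + 1, b + 1) ss" L "(a + 1, b)"] by simp
  then have distinct: "distinct ((a, b) # (a, b + 1) # vertices (a + 1, b + 1) ss @ [(a + 1, b)])"
    using corner_facts(4)[OF loop] by (simp add: vertices_snoc)
  have vertices: "vertices (a + 1, b) (U # ss) = (a + 1, b) # vertices (a + 1, b + 1) ss" by simp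
  show short: "simple_loop (a + 1, b) (U # ss)"
    unfolding simple_loop_def vertices using distinct closed ss \<open>s' \<noteq> []\<close> by (cases s') auto
  note short_loop = simple_loop_loop[OF short]
  then have short_distinct: "distinct (vertices (a + 1, b) (U # ss))"
    and short_closed: "endpoint (a + 1, b) (U # ss) = (a + 1, b)"
    unfolding loop_def by simp_all
  assume umlauf: "umlauf (a + 1, b) (U # ss)"
  have first_edge: "((a + 1, b + 1), s1) \<in> set (edges (a + 1, b) (U # ss))" using ss by simp
  have "(a, b + 1) \<notin> set (vertices (a + 1, b) (U # ss))" using distinct by (auto simp: vertices)
  moreover have "\<forall>v \<in> set (vertices (a + 1, b) (U # ss)). snd v \<le> b + 1"
    using top closed by (auto simp: vertices_snoc)
  ultimately have "winding (a + 1, b) (U # ss) (a, b) = 0"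
    using winding_vertical_step[OF short_distinct, of a b] winding_above[of "(a + 1, b)" "U # ss" "b + 1" a]
      not_in_edges_tail_free not_in_edges_same_tail[OF short_loop first_edge, of L] \<open>s1 \<noteq> L\<close>
    by simp
  moreover have "winding (a + 1, b) (U # ss) (a + 1, b) = -1"
    using winding_horizontal_step[OF short_distinct short_closed, of a b] calculation
      not_in_edges_same_tail[OF short_loop first_edge, of D] \<open>s1 \<noteq> D\<close>
    by simp
  moreover have "turning (U # ss) = turn U s1 + adjacent_sum turn ss + turn (last ss) U"
    unfolding turning_def using ss \<open>s' \<noteq> []\<close> by (cases s') auto
  then have "turning (U # R # ss @ [L]) = turning (U # ss)"
    using turning_Cons_Cons_snoc[of ss U R L] ss \<open>s1 \<noteq> D\<close> \<open>s1 \<noteq> L\<close> \<open>last ss \<noteq> R\<close>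
      \<open>last ss \<noteq> D\<close>
    by (cases s1; cases "last ss") (auto simp: turn_def)
  moreover have "\<forall>c. winding (a, b) (U # R # ss @ [L]) c
      = winding (a + 1, b) (U # ss) c + (if c = (a, b) then -1 else 0)"
    by (auto simp: winding_Cons winding_append closed)
  moreover have "area2 (a, b) (U # R # ss @ [L]) = area2 (a + 1, b) (U # ss) - 2"
    unfolding area2_Cons area2_append by (simp add: closed) (simp add: algebra_simps)
  ultimately show "umlauf (a, b) (U # R # ss @ [L])"
    using umlauf_add_cell[OF umlauf] by blast
qed

section \<open>Splitting a loop along a chord\<close>

text \<open>Scanning a column downwards from above both loops, a cell can only enter the interior of a
  loop through a rightward edge of that loop, and the cell below such an edge lies outside the other
  loop.\<close>
lemma windings_disjoint:
  assumes distinct: "distinct (vertices z1 p1)" "distinct (vertices z2 p2)"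
    and top: "\<forall>v \<in> set (vertices z1 p1) \<union> set (vertices z2 p2). snd v \<le> h"
    and signs: "\<forall>c. winding z1 p1 c = 0 \<or> winding z1 p1 c = -1"
      "\<forall>c. winding z2 p2 c = 0 \<or> winding z2 p2 c = -1"
    and below1: "\<forall>x y. ((x, y), R) \<in> set (edges z1 p1) \<longrightarrow> winding z2 p2 (x, y - 1) = 0"
    and below2: "\<forall>x y. ((x, y), R) \<in> set (edges z2 p2) \<longrightarrow> winding z1 p1 (x, y - 1) = 0"
  shows "winding z1 p1 (x, y) = 0 \<or> winding z2 p2 (x, y) = 0"
proof (induction "nat (h - y)" arbitrary: y)
  case 0
  then have "h \<le> y" by simp
  then have "\<forall>v \<in> set (vertices z1 p1). snd v \<le> y" using top by force
  then show ?case using winding_above by blast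
next
  case (Suc n)
  then have "n = nat (h - (y + 1))" by simp
  then have above: "winding z1 p1 (x, y + 1) = 0 \<or> winding z2 p2 (x, y + 1) = 0"
    using Suc.hyps(1) by blast
  have entry1: "((x, y + 1), R) \<in> set (edges z1 p1) \<Longrightarrow> winding z2 p2 (x, y) = 0"
    and entry2: "((x, y + 1), R) \<in> set (edges z2 p2) \<Longrightarrow> winding z1 p1 (x, y) = 0"
    using below1 below2 by force+
  show ?case
  proof (rule ccontr)
    assume "\<not> ?case"
    then have "winding z1 p1 (x, y) = -1" "winding z2 p2 (x, y) = -1" using signs by blast+
    then show False
      using above winding_vertical_step[OF distinct(1), of x y] winding_vertical_step[OF distinct(2), of x y]
        entry1 entry2
      by (auto split: if_splits)
  qed
qed

text \<open>The remaining case: the loop passes through (a + 1, b) without using the edges of the corner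
  cell.  It is split along the chord between (a, b) and (a + 1, b) into a loop through the corner
  and the rest.\<close>
locale chord_split =
  fixes a b :: int and X Y :: "step list"
  assumes loop: "simple_loop (a, b) (U # R # X @ Y)"
    and top: "\<forall>v \<in> set (vertices (a, b) (U # R # X @ Y)). snd v \<le> b + 1"
    and chord: "endpoint (a + 1, b + 1) X = (a + 1, b)"
    and X_not_down: "hd X \<noteq> D"
    and Y_nonempty: "Y \<noteq> []"
    and Y_not_left: "last Y \<noteq> L"
begin

abbreviation "first_loop \<equiv> U # R # X @ [L]"
abbreviation "second_loop \<equiv> Y @ [R]"

lemma X_nonempty: "X \<noteq> []"
  using chord by auto

lemma Y_closed: "endpoint (a + 1, b) Y = (a, b)"
  using loop chord unfolding simple_loop_def by simp

lemma vertices_split: "vertices (a, b) (U # R # X @ Y)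
    = (a, b) # (a, b + 1) # vertices (a + 1, b + 1) X @ vertices (a + 1, b) Y"
  by (simp add: vertices_append chord)

lemma distinct_split:
  "distinct ((a, b) # (a, b + 1) # vertices (a + 1, b + 1) X @ vertices (a + 1, b) Y)"
  using loop unfolding simple_loop_def vertices_split by simp

lemma edges_split: "edges (a, b) (U # R # X @ Y)
    = ((a, b), U) # ((a, b + 1), R) # edges (a + 1, b + 1) X @ edges (a + 1, b) Y"
  by (simp add: edges_append chord)

lemma vertices_first_loop:
  "vertices (a, b) first_loop = (a, b) # (a, b + 1) # vertices (a + 1, b + 1) X @ [(a + 1, b)]"
  by (simp add: vertices_snoc chord)

lemma vertices_second_loop: "vertices (a + 1, b) second_loop = vertices (a + 1, b) Y @ [(a, b)]"
  by (simp add: vertices_snoc Y_closed)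

lemma edges_first_loop: "edges (a, b) first_loop
    = ((a, b), U) # ((a, b + 1), R) # edges (a + 1, b + 1) X @ [((a + 1, b), L)]"
  by (simp add: edges_append chord)

lemma edges_second_loop: "edges (a + 1, b) second_loop = edges (a + 1, b) Y @ [((a, b), R)]"
  by (simp add: edges_append Y_closed)

lemma X_not_left: "hd X \<noteq> L"
  using corner_hd_last(1)[OF loop] X_nonempty by simp

lemma Y_last: "last Y = U \<or> last Y = R"
  using corner_hd_last(2)[OF loop] Y_nonempty Y_not_left by (cases "last Y") auto

lemma tl_Y_nonempty: "tl Y \<noteq> []"
proof
  assume "tl Y = []"
  then have "Y = [hd Y]" using Y_nonempty by (cases Y) auto
  then have "move (a + 1, b) (hd Y) = (a, b)" using Y_closed by (metis endpoint.simps)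
  then have "hd Y = L" by (cases "hd Y") auto
  then show False using Y_not_left \<open>Y = [hd Y]\<close> by (metis last_ConsL)
qed

lemma length_Y_ge_2: "2 \<le> length Y"
  using tl_Y_nonempty by (cases Y) (simp_all add: Suc_le_eq)

lemma simple_first_loop: "simple_loop (a, b) first_loop"
proof -
  have "(a + 1, b) \<in> set (vertices (a + 1, b) Y)" using Y_nonempty by (cases Y) auto
  then show ?thesis
    unfolding simple_loop_def vertices_first_loop using distinct_split chord by auto
qed

lemma simple_second_loop: "simple_loop (a + 1, b) second_loop"
  unfolding simple_loop_def vertices_second_loop using distinct_split Y_closed length_Y_ge_2 by auto

lemma first_loop_shorter: "length first_loop < length (U # R # X @ Y)"
  using length_Y_ge_2 by simp

lemma second_loop_shorter: "length second_loop < length (U # R # X @ Y)"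
  by simp

lemma first_loop_below: "\<forall>v \<in> set (vertices (a, b) first_loop). snd v \<le> b + 1"
  using top unfolding vertices_first_loop vertices_split by auto

lemma second_loop_below: "\<forall>v \<in> set (vertices (a + 1, b) second_loop). snd v \<le> b + 1"
  using top unfolding vertices_second_loop vertices_split by auto

lemma first_loop_windings:
  shows "winding (a, b) first_loop (a, b) = -1" and "winding (a, b) first_loop (a, b - 1) = 0"
    and "winding (a, b) first_loop (a + 1, b) = -1" and "winding (a, b) first_loop (a - 1, b) = 0"
proof -
  note first = simple_loop_loop[OF simple_first_loop]
  then have distinct: "distinct (vertices (a, b) first_loop)"
    and closed: "endpoint (a, b) first_loop = (a, b)"
    unfolding loop_def by simp_all
  have up: "((a, b), U) \<in> set (edges (a, b) first_loop)"
    and right: "((a, b + 1), R) \<in> set (edges (a, b) first_loop)"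
    and leftward: "((a + 1, b), L) \<in> set (edges (a, b) first_loop)"
    and onward: "((a + 1, b + 1), hd X) \<in> set (edges (a, b) first_loop)"
    unfolding edges_first_loop using hd_edge[OF X_nonempty] by auto
  have "winding (a, b) first_loop (a, b + 1) = 0"
    using winding_above first_loop_below by blast
  then show W: "winding (a, b) first_loop (a, b) = -1"
    using winding_vertical_step[OF distinct, of a b] right
      not_in_edges_same_tail[OF first onward, of L] X_not_left by simp
  show "winding (a, b) first_loop (a, b - 1) = 0"
    using winding_vertical_step'[OF distinct, of a b] W leftward
      not_in_edges_same_tail[OF first up, of R] by simp
  show "winding (a, b) first_loop (a + 1, b) = -1"
    using winding_horizontal_step[OF distinct closed, of a b] W
      not_in_edges_same_tail[OF first leftward, of U] not_in_edges_same_tail[OF first onward, of D] X_not_down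
    by simp
  show "winding (a, b) first_loop (a - 1, b) = 0"
    using winding_horizontal_step'[OF distinct closed, of a b] W up
      not_in_edges_same_tail[OF first right, of D] by simp
qed

lemma edges_in_split:
  "set (edges (a + 1, b + 1) X) \<subseteq> set (edges (a, b) (U # R # X @ Y))"
  "set (edges (a + 1, b) Y) \<subseteq> set (edges (a, b) (U # R # X @ Y))"
  unfolding edges_split by auto

lemma X_penultimate:
  "(endpoint (a + 1, b + 1) (butlast X), last X) \<in> set (edges (a + 1, b + 1) X)"
  "move (endpoint (a + 1, b + 1) (butlast X)) (last X) = (a + 1, b)"
  using last_edge[OF X_nonempty] chord by simp_all

lemma X_last_step: "last X = U \<or> last X = L"
proof -
  note whole = corner_facts(1)[OF loop]
  define u where "u = endpoint (a + 1, b + 1) (butlast X)"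
  have "last X \<noteq> R"
  proof
    assume "last X = R"
    then have "u = (a, b)" using X_penultimate(2) move_inject[of u R "(a, b)"] u_def by simp
    then show False using X_penultimate(1) edge_tail_in_vertices distinct_split u_def by fastforce
  qed
  moreover have "last X \<noteq> D"
  proof
    assume "last X = D"
    then have "u = (a + 1, b + 1)"
      using X_penultimate(2) move_inject[of u D "(a + 1, b + 1)"] u_def by simp
    then have "((a + 1, b + 1), D) \<in> set (edges (a, b) (U # R # X @ Y))"
      using X_penultimate(1) edges_in_split(1) \<open>last X = D\<close> u_def by auto
    moreover have "((a + 1, b + 1), hd X) \<in> set (edges (a, b) (U # R # X @ Y))"
      using hd_edge[OF X_nonempty] edges_in_split(1) by blast
    ultimately show False using not_in_edges_same_tail[OF whole] X_not_down by blast
  qed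
  ultimately show ?thesis by (cases "last X") auto
qed

lemma Y_first_step: "hd Y = R \<or> hd Y = D"
proof -
  note whole = corner_facts(1)[OF loop]
  have Y_first: "((a + 1, b), hd Y) \<in> set (edges (a, b) (U # R # X @ Y))"
    using hd_edge[OF Y_nonempty] edges_in_split(2) by blast
  have "hd Y \<noteq> L"
  proof
    assume "hd Y = L"
    define w where "w = endpoint (a + 1, b) (butlast Y)"
    have "(w, last Y) \<in> set (edges (a, b) (U # R # X @ Y))"
      using last_edge(1)[OF Y_nonempty] edges_in_split(2) w_def by blast
    moreover have "move w (last Y) = move (a + 1, b) L"
      using last_edge(2)[OF Y_nonempty] w_def Y_closed by simp
    ultimately show False
      using edge_head_unique[OF whole _ Y_first] \<open>hd Y = L\<close> Y_not_left by fastforce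
  qed
  moreover have "hd Y \<noteq> U"
  proof
    assume "hd Y = U"
    have "((a, b + 1), R) \<in> set (edges (a, b) (U # R # X @ Y))" by simp
    then show False
      using edge_head_unique[OF whole _ Y_first] \<open>hd Y = U\<close> by fastforce
  qed
  ultimately show ?thesis by (cases "hd Y") auto
qed

text \<open>The cases U, D and L, R are excluded because X and Y would meet at a vertex next to
  (a + 1, b).\<close>
lemma junction_cases: "(last X = U \<and> hd Y = R) \<or> (last X = L \<and> hd Y = D)"
proof -
  define u where "u = endpoint (a + 1, b + 1) (butlast X)"
  have "u \<in> set (vertices (a + 1, b + 1) X)"
    using X_penultimate(1) edge_tail_in_vertices u_def by blast
  moreover have "move (a + 1, b) (hd Y) \<in> set (vertices (a + 1, b) Y)"
    using tl_Y_nonempty Y_nonempty by (cases Y; cases "tl Y") auto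
  ultimately have "u \<noteq> move (a + 1, b) (hd Y)" using distinct_split by auto
  moreover have "move u (last X) = (a + 1, b)" using X_penultimate(2) u_def by simp
  ultimately show ?thesis
    using X_last_step Y_first_step by (cases u) auto
qed

text \<open>At a U, R junction the rest of the second loop runs from (a + 2, b) back to a neighbour of
  (a, b) outside the first loop; but the winding number of the first loop is -1 at (a + 2, b) and 0
  at both possible neighbours.\<close>
lemma junction: "last X = L \<and> hd Y = D"
proof (rule ccontr)
  assume "\<not> ?thesis"
  then have "hd Y = R" using junction_cases by blast
  note first = simple_loop_loop[OF simple_first_loop]
  define Y' where "Y' = tl Y"
  have Y: "Y = R # Y'" using \<open>hd Y = R\<close> Y_nonempty Y'_def by (cases Y) auto
  have "Y' \<noteq> []" using tl_Y_nonempty Y'_def by simp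
  define w where "w = endpoint (a + 2, b) (butlast Y')"
  have w_in: "w \<in> set (vertices (a + 2, b) Y')"
    using last_edge(1)[OF \<open>Y' \<noteq> []\<close>] edge_tail_in_vertices w_def by blast
  have "move w (last Y) = (a, b)"
    using last_edge(2)[OF \<open>Y' \<noteq> []\<close>, of "(a + 2, b)"] w_def Y_closed Y \<open>Y' \<noteq> []\<close>
    by (simp add: add.commute)
  then have "w = (a, b - 1) \<or> w = (a - 1, b)"
    using Y_last by (cases w) auto
  then have "winding (a, b) first_loop w = 0" using first_loop_windings by auto
  moreover have free: "set (vertices (a + 2, b) Y') \<inter> set (vertices (a, b) first_loop) = {}"
    using distinct_split Y unfolding vertices_first_loop by (auto simp: add.commute)
  then have "winding (a, b) first_loop w = winding (a, b) first_loop (a + 2, b)"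
    using winding_free_walk[OF first _ w_in] by blast
  moreover have "(a + 2, b) \<notin> set (vertices (a, b) first_loop)"
    using free \<open>Y' \<noteq> []\<close> by (cases Y') auto
  then have "winding (a, b) first_loop (a + 2, b) = winding (a, b) first_loop (a + 1, b)"
    using winding_around_free_vertex(3)[OF first, of "a + 2" b] by (simp add: ac_simps)
  ultimately show False using first_loop_windings(3) by simp
qed

lemma second_loop_windings:
  shows "winding (a + 1, b) second_loop (a, b) = 0"
    and "winding (a + 1, b) second_loop (a, b - 1) = -1"
proof -
  note second = simple_loop_loop[OF simple_second_loop]
  have "(a, b + 1) \<notin> set (vertices (a + 1, b) second_loop)"
    using distinct_split unfolding vertices_second_loop by auto
  moreover have "((a, b), R) \<in> set (edges (a + 1, b) second_loop)"
    unfolding edges_second_loop by simp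
  moreover have "((a + 1, b), D) \<in> set (edges (a + 1, b) second_loop)"
    unfolding edges_second_loop using hd_edge[OF Y_nonempty] junction by auto
  then have "((a + 1, b), L) \<notin> set (edges (a + 1, b) second_loop)"
    using not_in_edges_same_tail[OF second] by blast
  ultimately show "winding (a + 1, b) second_loop (a, b) = 0"
    and "winding (a + 1, b) second_loop (a, b - 1) = -1"
    using windings_under_top_edge[OF second second_loop_below] by simp_all
qed

lemma first_loop_outside_second:
  assumes "((x, y), R) \<in> set (edges (a, b) first_loop)"
  shows "winding (a + 1, b) second_loop (x, y - 1) = 0"
proof (rule winding_below_free_walk[OF simple_loop_loop[OF simple_second_loop]])
  show "set (vertices (a, b + 1) (R # X)) \<inter> set (vertices (a + 1, b) second_loop) = {}"
    using distinct_split unfolding vertices_second_loop by auto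
  have "\<forall>v \<in> set (vertices (a + 1, b) second_loop). snd v \<le> b + 1" by (rule second_loop_below)
  then show "winding (a + 1, b) second_loop (a, b + 1) = 0" by (rule winding_above)
  note first = simple_loop_loop[OF simple_first_loop]
  have "((a, b), U) \<in> set (edges (a, b) first_loop)"
    and "((a + 1, b), L) \<in> set (edges (a, b) first_loop)"
    unfolding edges_first_loop by simp_all
  then have "(x, y) \<noteq> (a, b)" and "(x, y) \<noteq> (a + 1, b)"
    using assms not_in_edges_same_tail[OF first, of "(a, b)" U R]
      not_in_edges_same_tail[OF first, of "(a + 1, b)" L R]
    by auto
  then show "(x, y) \<in> set (vertices (a, b + 1) (R # X))"
    using edge_tail_in_vertices[OF assms] unfolding vertices_first_loop by auto
qed

lemma first_loop_winding_below_chord: "winding (a, b) first_loop (a + 1, b - 1) = 0"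
proof -
  note first = simple_loop_loop[OF simple_first_loop]
  have "((a + 1, b), L) \<in> set (edges (a, b) first_loop)"
    unfolding edges_first_loop by simp
  moreover have "((a + 2, b), L) \<in> set (edges (a, b) first_loop)"
  proof -
    have "endpoint (a + 1, b + 1) (butlast X) = (a + 2, b)"
      using X_penultimate(2) junction by (cases "endpoint (a + 1, b + 1) (butlast X)") auto
    then show ?thesis using X_penultimate(1) junction unfolding edges_first_loop by auto
  qed
  ultimately show ?thesis
    using winding_vertical_step'[of "(a, b)" first_loop "a + 1" b] first first_loop_windings(3)
      not_in_edges_same_tail[OF first, of "(a + 1, b)" L R]
    unfolding loop_def by (simp add: add.commute)
qed

lemma second_loop_outside_first:
  assumes "((x, y), R) \<in> set (edges (a + 1, b) second_loop)"
  shows "winding (a, b) first_loop (x, y - 1) = 0"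
proof (cases "(x, y) = (a, b)")
  case True
  then show ?thesis using first_loop_windings(2) by simp
next
  case False
  define Y' where "Y' = tl Y"
  have Y: "Y = D # Y'" using junction Y_nonempty Y'_def by (cases Y) auto
  show ?thesis
  proof (rule winding_below_free_walk[OF simple_loop_loop[OF simple_first_loop]])
    show "set (vertices (a + 1, b - 1) Y') \<inter> set (vertices (a, b) first_loop) = {}"
      using distinct_split Y unfolding vertices_first_loop by auto
    show "winding (a, b) first_loop (a + 1, b - 1) = 0"
      by (rule first_loop_winding_below_chord)
    have "((a + 1, b), D) \<in> set (edges (a + 1, b) second_loop)"
      unfolding edges_second_loop Y by simp
    then have "(x, y) \<noteq> (a + 1, b)"
      using assms not_in_edges_same_tail[OF simple_loop_loop[OF simple_second_loop], of "(a + 1, b)" D R]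
      by auto
    then show "(x, y) \<in> set (vertices (a + 1, b - 1) Y')"
      using edge_tail_in_vertices[OF assms] False Y unfolding vertices_second_loop by auto
  qed
qed

lemma turning_split: "turning (U # R # X @ Y) = turning first_loop + turning second_loop - 4"
  using turning_Cons_Cons_append[OF X_nonempty Y_nonempty, of U R]
    turning_Cons_Cons_snoc[OF X_nonempty, of U R L] turning_snoc[OF Y_nonempty, of R]
    junction Y_last
  by (auto simp: turn_def)

lemma winding_split:
  "winding (a, b) (U # R # X @ Y) c = winding (a, b) first_loop c + winding (a + 1, b) second_loop c"
proof -
  have "ray_crossing c ((a + 1, b), L) + ray_crossing c ((a, b), R) = 0"
    by (cases c) auto
  then show ?thesis
    unfolding winding_def edges_split edges_first_loop edges_second_loop by simp
qed

lemma area2_split: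
  "area2 (a, b) (U # R # X @ Y) = area2 (a, b) first_loop + area2 (a + 1, b) second_loop"
proof -
  have "cross ((a + 1, b), L) + cross ((a, b), R) = 0"
    by (simp add: algebra_simps)
  then show ?thesis
    unfolding area2_def edges_split edges_first_loop edges_second_loop by (simp del: cross.simps)
qed

lemma umlauf_split:
  assumes "umlauf (a, b) first_loop" and "umlauf (a + 1, b) second_loop"
  shows "umlauf (a, b) (U # R # X @ Y)"
proof -
  obtain \<sigma>1 :: int where \<sigma>1: "\<sigma>1 = 1 \<or> \<sigma>1 = -1" "turning first_loop = 4 * \<sigma>1"
    "\<forall>c. winding (a, b) first_loop c = 0 \<or> winding (a, b) first_loop c = - \<sigma>1"
    "\<sigma>1 * area2 (a, b) first_loop < 0"
    using assms(1) unfolding umlauf_def by blast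
  have "\<sigma>1 = 1" using \<sigma>1(1) \<sigma>1(3)[rule_format, of "(a, b)"] first_loop_windings(1) by auto
  obtain \<sigma>2 :: int where \<sigma>2: "\<sigma>2 = 1 \<or> \<sigma>2 = -1" "turning second_loop = 4 * \<sigma>2"
    "\<forall>c. winding (a + 1, b) second_loop c = 0 \<or> winding (a + 1, b) second_loop c = - \<sigma>2"
    "\<sigma>2 * area2 (a + 1, b) second_loop < 0"
    using assms(2) unfolding umlauf_def by blast
  have "\<sigma>2 = 1" using \<sigma>2(1) \<sigma>2(3)[rule_format, of "(a, b - 1)"] second_loop_windings(2) by auto
  have disjoint: "winding (a, b) first_loop c = 0 \<or> winding (a + 1, b) second_loop c = 0" for c
  proof (cases c)
    case (Pair x y)
    have "\<forall>v \<in> set (vertices (a, b) first_loop) \<union> set (vertices (a + 1, b) second_loop). snd v \<le> b + 1"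
      using first_loop_below second_loop_below by blast
    then show ?thesis
      unfolding Pair
      using windings_disjoint[of "(a, b)" first_loop "(a + 1, b)" second_loop]
        simple_first_loop simple_second_loop \<sigma>1(3) \<sigma>2(3) \<open>\<sigma>1 = 1\<close> \<open>\<sigma>2 = 1\<close>
        first_loop_outside_second second_loop_outside_first
      unfolding simple_loop_def by blast
  qed
  have "winding (a, b) (U # R # X @ Y) c = 0 \<or> winding (a, b) (U # R # X @ Y) c = -1" for c
    using disjoint[of c] \<sigma>1(3)[rule_format, of c] \<sigma>2(3)[rule_format, of c] \<open>\<sigma>1 = 1\<close> \<open>\<sigma>2 = 1\<close>
    unfolding winding_split by auto
  then show ?thesis
    unfolding umlauf_def turning_split area2_split
    using \<sigma>1 \<sigma>2 \<open>\<sigma>1 = 1\<close> \<open>\<sigma>2 = 1\<close> by (intro exI[of _ 1]) auto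
qed

end

section \<open>The discrete Umlaufsatz\<close>

lemma umlauf_top_corner:
  assumes loop: "simple_loop (a, b) (U # R # ss)"
    and top: "\<forall>v \<in> set (vertices (a, b) (U # R # ss)). snd v \<le> b + 1"
    and shorter: "\<And>z p. length p < length (U # R # ss) \<Longrightarrow> simple_loop z p \<Longrightarrow> umlauf z p"
    and lower: "\<And>z p. length p = length (U # R # ss)
      \<Longrightarrow> height_sum (set (vertices z p)) < height_sum (set (vertices (a, b) (U # R # ss)))
      \<Longrightarrow> simple_loop z p \<Longrightarrow> umlauf z p"
  shows "umlauf (a, b) (U # R # ss)"
proof -
  note corner = corner_facts[OF loop]
  consider (down) rest where "ss = D # rest"
    | (returning) ss' where "hd ss \<noteq> D" and "ss = ss' @ [L]"
    | (chord) "hd ss \<noteq> D" and "last ss \<noteq> L" and "(a + 1, b) \<in> set (vertices (a, b) (U # R # ss))"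
    | (flip) "(a + 1, b) \<notin> set (vertices (a, b) (U # R # ss))"
    using corner(3) by (metis append_butlast_last_id list.collapse)
  then show ?thesis
  proof cases
    case (down rest)
    then show ?thesis
      using unit_square_umlauf corner_cut_cell[of a b rest] loop top shorter
      by (cases "rest = [L]") simp_all
  next
    case (returning ss')
    then show ?thesis
      using corner_shortcut[of a b ss'] loop top shorter by simp
  next
    case chord
    then have "(a + 1, b) \<in> set (vertices (a + 1, b + 1) ss)" by auto
    then obtain X Y where split: "ss = X @ Y" "endpoint (a + 1, b + 1) X = (a + 1, b)" "Y \<noteq> []"
      using split_at_vertex by blast
    then have "X \<noteq> []" by auto
    interpret chord_split a b X Y
      using loop top chord split \<open>X \<noteq> []\<close> by unfold_locales auto
    show ?thesis
      using umlauf_split shorter simple_first_loop simple_second_loop first_loop_shorter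
        second_loop_shorter split(1)
      by simp
  next
    case flip
    then show ?thesis
      using corner_flip[OF loop top] lower by simp
  qed
qed

lemma finite_top_left:
  fixes S :: "(int \<times> int) set"
  assumes "finite S" and "S \<noteq> {}"
  obtains x y where "(x, y) \<in> S" and "\<forall>v \<in> S. snd v \<le> y" and "\<forall>v \<in> S. snd v = y \<longrightarrow> x \<le> fst v"
proof -
  define y where "y = Max (snd ` S)"
  define T where "T = {v \<in> S. snd v = y}"
  have "y \<in> snd ` S" unfolding y_def using assms by simp
  then have "finite T" and "T \<noteq> {}" unfolding T_def using assms by auto
  then have "Min (fst ` T) \<in> fst ` T" by simp
  then have "(Min (fst ` T), y) \<in> S" unfolding T_def by auto
  moreover have "\<forall>v \<in> S. snd v \<le> y" unfolding y_def using assms by simp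
  moreover have "\<forall>v \<in> S. snd v = y \<longrightarrow> Min (fst ` T) \<le> fst v"
    unfolding T_def using \<open>finite T\<close> T_def by auto
  ultimately show ?thesis using that by blast
qed

lemma top_left_steps:
  assumes loop: "simple_loop (x, y) q"
    and below: "\<forall>v \<in> set (vertices (x, y) q). snd v \<le> y"
    and right: "\<forall>v \<in> set (vertices (x, y) q). snd v = y \<longrightarrow> x \<le> fst v"
  obtains m where "q = R # m @ [U] \<or> q = D # m @ [L]"
proof -
  have closed: "endpoint (x, y) q = (x, y)" and "distinct (vertices (x, y) q)" and "3 \<le> length q"
    using loop unfolding simple_loop_def by auto
  obtain s m t where q: "q = s # m @ [t]" and "m \<noteq> []"
  proof -
    obtain s q' where "q = s # q'" using \<open>3 \<le> length q\<close> by (cases q) auto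
    moreover obtain m t where "q' = m @ [t]"
      using calculation \<open>3 \<le> length q\<close> by (cases q' rule: rev_cases) auto
    ultimately show ?thesis using that \<open>3 \<le> length q\<close> by (cases m) auto
  qed
  have "move (x, y) s \<in> set (vertices (x, y) q)"
    using edge_head_in_vertices[OF closed, of "(x, y)" s] q by simp
  then have "s \<noteq> U" and "s \<noteq> L" using below right by force+
  define w where "w = endpoint (move (x, y) s) m"
  have "w \<in> set (vertices (x, y) q)" using q w_def by (simp add: vertices_snoc)
  moreover have "move w t = (x, y)" using closed q w_def by simp
  then have w: "w = move (x, y) (opposite t)" using move_opposite[of w t] by simp
  ultimately have "t \<noteq> D" and "t \<noteq> R" using below right by force+
  have "move (x, y) s \<in> set (vertices (move (x, y) s) m)" using \<open>m \<noteq> []\<close> by (cases m) auto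
  then have "w \<noteq> move (x, y) s"
    using \<open>distinct (vertices (x, y) q)\<close> q w_def by (auto simp: vertices_snoc)
  then have "(s = R \<and> t = U) \<or> (s = D \<and> t = L)"
    using \<open>s \<noteq> U\<close> \<open>s \<noteq> L\<close> \<open>t \<noteq> D\<close> \<open>t \<noteq> R\<close> w by (cases s; cases t) auto
  then show ?thesis using that q by blast
qed

lemma rotate_to_corner:
  assumes "simple_loop (x, y) (R # m @ [U])"
  shows "simple_loop (x, y - 1) (U # R # m)"
    and "set (vertices (x, y - 1) (U # R # m)) = set (vertices (x, y) (R # m @ [U]))"
    and "umlauf (x, y - 1) (U # R # m) \<Longrightarrow> umlauf (x, y) (R # m @ [U])"
proof -
  have closed: "endpoint (x, y) ((R # m) @ [U]) = (x, y)"
    using assms unfolding simple_loop_def by simp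
  then have "endpoint (x, y) (R # m) = (x, y - 1)"
    using move_inject[of "endpoint (x, y) (R # m)" U "(x, y - 1)"] by simp
  then show "simple_loop (x, y - 1) (U # R # m)"
    and "set (vertices (x, y - 1) (U # R # m)) = set (vertices (x, y) (R # m @ [U]))"
    and "umlauf (x, y - 1) (U # R # m) \<Longrightarrow> umlauf (x, y) (R # m @ [U])"
    using simple_loop_rotate[of "(x, y)" "R # m" "[U]"] set_vertices_rotate[OF closed]
      umlauf_rotate[OF closed] assms
    by simp_all
qed

lemma simple_loop_start_at_vertex:
  assumes loop: "simple_loop z p" and "v \<in> set (vertices z p)"
  obtains q where "simple_loop v q" and "length q = length p"
    and "set (vertices v q) = set (vertices z p)" and "umlauf v q \<Longrightarrow> umlauf z p"
proof -
  obtain X Y where XY: "p = X @ Y" "endpoint z X = v"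
    using split_at_vertex assms(2) by blast
  have closed: "endpoint z (X @ Y) = z" using loop XY unfolding simple_loop_def by simp
  show ?thesis
    using that[of "Y @ X"] simple_loop_rotate[of z X Y] umlauf_rotate[OF closed]
      set_vertices_rotate[OF closed] loop XY
    by simp
qed

lemma simple_loop_normal_form:
  assumes loop: "simple_loop z p"
  obtains a b ss where "simple_loop (a, b) (U # R # ss)" and "length (U # R # ss) = length p"
    and "set (vertices (a, b) (U # R # ss)) = set (vertices z p)"
    and "\<forall>v \<in> set (vertices z p). snd v \<le> b + 1"
    and "umlauf (a, b) (U # R # ss) \<Longrightarrow> umlauf z p"
proof -
  have "set (vertices z p) \<noteq> {}" using loop unfolding simple_loop_def by (cases p) auto
  then obtain x y where top_left: "(x, y) \<in> set (vertices z p)"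
    "\<forall>v \<in> set (vertices z p). snd v \<le> y" "\<forall>v \<in> set (vertices z p). snd v = y \<longrightarrow> x \<le> fst v"
    using finite_top_left[of "set (vertices z p)"] by blast
  then obtain q where q: "simple_loop (x, y) q" "length q = length p"
    "set (vertices (x, y) q) = set (vertices z p)" "umlauf (x, y) q \<Longrightarrow> umlauf z p"
    using simple_loop_start_at_vertex[OF loop] by metis
  obtain m where "q = R # m @ [U] \<or> q = D # m @ [L]"
    using top_left_steps[OF q(1)] top_left q(3) by metis
  then obtain m' where m': "simple_loop (x, y) (R # m' @ [U])" "length m' + 2 = length p"
    "set (vertices (x, y) (R # m' @ [U])) = set (vertices z p)"
    "umlauf (x, y) (R # m' @ [U]) \<Longrightarrow> umlauf z p"
  proof
    assume "q = R # m @ [U]"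
    then show ?thesis using that[of m] q by simp
  next
    assume D: "q = D # m @ [L]"
    have closed: "endpoint (x, y) q = (x, y)" using q(1) unfolding simple_loop_def by simp
    have "reverse_walk q = R # map opposite (rev m) @ [U]" unfolding reverse_walk_def D by simp
    then show ?thesis
      using that[of "map opposite (rev m)"] simple_loop_reverse_walk[OF q(1)]
        umlauf_reverse_walkD[OF closed] set_vertices_reverse_walk[OF closed] q D
      by auto
  qed
  show ?thesis
    using that[OF rotate_to_corner(1)[OF m'(1)]] rotate_to_corner(2,3)[OF m'(1)] m' top_left(2)
    by simp
qed

theorem umlauf_simple_loop: "simple_loop z p \<Longrightarrow> umlauf z p"
proof (induction "(z, p)" arbitrary: z p
    rule: wf_induct[OF wf_measures[of "[\<lambda>(z, p). length p, \<lambda>(z, p). height_sum (set (vertices z p))]"]])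
  case 1
  obtain a b ss where normal: "simple_loop (a, b) (U # R # ss)" "length (U # R # ss) = length p"
    "set (vertices (a, b) (U # R # ss)) = set (vertices z p)"
    "\<forall>v \<in> set (vertices z p). snd v \<le> b + 1" "umlauf (a, b) (U # R # ss) \<Longrightarrow> umlauf z p"
    using simple_loop_normal_form[OF 1(2)] by blast
  have "umlauf (a, b) (U # R # ss)"
    by (rule umlauf_top_corner[OF normal(1)]) (use 1(1) normal(2-4) in auto)
  then show ?case using normal(5) by blast
qed

section \<open>Positions, cyclic turn counts and signed area\<close>

lemma move_eq: "move v s = (fst v + fst (step_vec s), snd v + snd (step_vec s))"
  by (cases v; cases s) auto

lemma pos_Suc: "pos p (Suc i) = move (pos p i) (p ! i)"
  by (simp add: move_eq pos_def)

lemma endpoint_take_eq_pos: "i \<le> length p \<Longrightarrow> endpoint (0, 0) (take i p) = pos p i"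
proof (induction i)
  case 0
  then show ?case by (simp add: pos_def)
next
  case (Suc i)
  then have "take (Suc i) p = take i p @ [p ! i]" by (simp add: take_Suc_conv_app_nth)
  then show ?case using Suc by (simp add: pos_Suc)
qed

lemma endpoint_eq_pos: "endpoint (0, 0) p = pos p (length p)"
  using endpoint_take_eq_pos[of "length p" p] by simp

lemma vertices_eq_map_endpoint: "vertices z p = map (\<lambda>i. endpoint z (take i p)) [0..<length p]"
proof (induction p arbitrary: z)
  case Nil
  then show ?case by simp
next
  case (Cons s ss)
  then show ?case by (simp add: map_upt_Suc del: upt_Suc)
qed

lemma vertices_eq_map_pos: "vertices (0, 0) p = map (pos p) [0..<length p]"
  unfolding vertices_eq_map_endpoint using endpoint_take_eq_pos by (intro map_cong) auto

lemma edges_eq_zip: "edges z p = zip (vertices z p) p"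
  by (induction p arbitrary: z) auto

lemma area2_eq_signed_area2: "area2 (0, 0) p = signed_area2 p"
proof -
  have "area2 (0, 0) p = (\<Sum>i = 0..<length p. cross (zip (vertices (0, 0) p) p ! i))"
    unfolding area2_def edges_eq_zip sum_list_sum_nth by simp
  also have "\<dots> = signed_area2 p"
    unfolding signed_area2_def by (rule sum.cong) (auto simp: vertices_eq_map_pos pos_Suc)
  finally show ?thesis .
qed

lemma adjacent_sum_eq_sum: "adjacent_sum f xs = (\<Sum>i < length xs - 1. f (xs ! i) (xs ! Suc i))"
proof (induction xs rule: induct_list012)
  case (3 a b xs)
  then show ?case by (simp add: sum.lessThan_Suc_shift del: sum.lessThan_Suc)
qed simp_all

lemma turning_eq_sum:
  assumes "p \<noteq> []"
  shows "turning p = (\<Sum>i < length p. turn (p ! i) (p ! (Suc i mod length p)))"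
proof -
  define n where "n = length p"
  have n: "n = Suc (n - 1)" using assms n_def by simp
  have "(\<Sum>i < n. turn (p ! i) (p ! (Suc i mod n)))
      = (\<Sum>i < n - 1. turn (p ! i) (p ! (Suc i mod n))) + turn (p ! (n - 1)) (p ! (Suc (n - 1) mod n))"
    by (subst n) (simp only: sum.lessThan_Suc)
  also have "(\<Sum>i < n - 1. turn (p ! i) (p ! (Suc i mod n))) = (\<Sum>i < n - 1. turn (p ! i) (p ! Suc i))"
    by (rule sum.cong) auto
  also have "p ! (Suc (n - 1) mod n) = hd p" using n assms by (simp add: hd_conv_nth)
  also have "p ! (n - 1) = last p" using assms n_def by (simp add: last_conv_nth)
  finally show ?thesis unfolding turning_def adjacent_sum_eq_sum n_def using assms by simp
qed

lemma int_card_eq_sum_of_bool: "int (card {i. i < n \<and> P i}) = (\<Sum>i < n. of_bool (P i))"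
  for n :: nat
proof -
  have "{i. i < n \<and> P i} = {..<n} \<inter> {i. P i}" by auto
  then show ?thesis by simp
qed

lemma turning_eq_cyc_turns:
  assumes "p \<noteq> []"
  shows "(\<Sum>s\<in>{U, R, D, L}. int (cyc_turns p s (cw s)) - int (cyc_turns p (cw s) s)) = turning p"
proof -
  define nx where "nx i = p ! (Suc i mod length p)" for i
  have "turn a b = (\<Sum>s\<in>{U, R, D, L}. of_bool (a = s \<and> b = cw s) - of_bool (a = cw s \<and> b = s))"
    for a b
    by (cases a; cases b) (simp_all add: turn_def)
  then have "turning p = (\<Sum>s\<in>{U, R, D, L}. \<Sum>i < length p.
      of_bool (p ! i = s \<and> nx i = cw s) - of_bool (p ! i = cw s \<and> nx i = s))"
    unfolding turning_eq_sum[OF assms] nx_def by (subst sum.swap) simp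
  then show ?thesis
    unfolding cyc_turns_def int_card_eq_sum_of_bool nx_def by (simp add: sum_subtractf)
qed

lemma simple_loop_of_closed_self_avoiding:
  assumes "directed p" and "p \<noteq> []" and "closed p" and "self_avoiding p"
  shows "simple_loop (0, 0) p"
proof -
  have closed: "endpoint (0, 0) p = (0, 0)"
    using assms(3) endpoint_eq_pos unfolding closed_def by simp
  moreover have "distinct (vertices (0, 0) p)"
    using assms(4) unfolding self_avoiding_def vertices_eq_map_pos
    by (simp add: distinct_map atLeast0LessThan)
  moreover have "3 \<le> length p"
  proof (rule ccontr)
    assume "\<not> 3 \<le> length p"
    then consider s where "p = [s]" | s t where "p = [s, t]"
      using assms(2) by (cases p; cases "tl p") (auto simp: Suc_le_eq)
    then show False
    proof cases
      case (1 s)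
      then show False using closed by (cases s) auto
    next
      case (2 s t)
      then have "t = opposite s" using closed move_move_eq_self by simp
      then show False using assms(1) 2 unfolding directed_def by auto
    qed
  qed
  ultimately show ?thesis unfolding simple_loop_def by simp
qed

theorem proposition2p2:
  fixes p :: "step list"
  assumes "directed p" and "p \<noteq> []"
  shows "(\<exists>k::int. \<forall>s.
            (int (turns p s (cw s)) - int (turns p (cw s) s) - k \<in> {0, 1}) \<and>
            (int (turns p s (cw s)) - int (turns p (cw s) s) - k = 1 \<longleftrightarrow>
               (\<exists>j < cw_dist (hd p) (last p). s = (cw ^^ j) (hd p))))
       \<and> (closed p \<and> self_avoiding p \<longrightarrow>
            (clockwise p \<longrightarrow>
               (\<Sum>s\<in>{U, R, D, L}. int (cyc_turns p s (cw s)) - int (cyc_turns p (cw s) s)) = 4) \<and>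
            (counterclockwise p \<longrightarrow>
               (\<Sum>s\<in>{U, R, D, L}. int (cyc_turns p s (cw s)) - int (cyc_turns p (cw s) s)) = -4))"
proof (intro conjI impI)
  obtain k where "\<forall>s. turn_balance p s
      = k + (if cw_dist (hd p) s < cw_dist (hd p) (last p) then 1 else 0)"
    using turn_balance_arc[OF assms] by blast
  then show "\<exists>k::int. \<forall>s.
      (int (turns p s (cw s)) - int (turns p (cw s) s) - k \<in> {0, 1}) \<and>
      (int (turns p s (cw s)) - int (turns p (cw s) s) - k = 1 \<longleftrightarrow>
         (\<exists>j < cw_dist (hd p) (last p). s = (cw ^^ j) (hd p)))"
    unfolding cw_arc_iff turn_balance_def by (intro exI[of _ k]) auto
next
  assume "closed p \<and> self_avoiding p"
  then have "umlauf (0, 0) p"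
    using umlauf_simple_loop simple_loop_of_closed_self_avoiding assms by blast
  then obtain \<sigma> :: int where "\<sigma> = 1 \<or> \<sigma> = -1" and "turning p = 4 * \<sigma>"
    and "\<sigma> * signed_area2 p < 0"
    unfolding umlauf_def area2_eq_signed_area2 by blast
  then show "clockwise p \<Longrightarrow>
      (\<Sum>s\<in>{U, R, D, L}. int (cyc_turns p s (cw s)) - int (cyc_turns p (cw s) s)) = 4"
    and "counterclockwise p \<Longrightarrow>
      (\<Sum>s\<in>{U, R, D, L}. int (cyc_turns p s (cw s)) - int (cyc_turns p (cw s) s)) = -4"
    unfolding turning_eq_cyc_turns[OF assms(2)] clockwise_def counterclockwise_def
    by auto
qed

end
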